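(* Let $A$ be a basic connected finite dimensional algebra over an algebraically closed field $k$ whose ordinary quiver has no oriented cycles, and let $D\subseteq\mathsf{HH}^1(A)$. Then $D$ is diagonalizable if and only if every element of $D$ is diagonalizable and $[f,f']=0$ for all $f,f'\in D$.
   Context: Fix a complete set $e_1,\dots,e_n$ of primitive orthogonal idempotents of $A$, $E=\bigoplus ke_i$, $\mathfrak r$ the radical. $\mathsf{HH}^1(A)$ is identified with the Lie algebra $Der_0(A)/Int_0(A)$, where $Der_0(A)$ is the Lie algebra (commutator bracket) of derivations $d$ of $A$ with $d(e_i)=0$ for all $i$, and $Int_0(A)=\{\delta_e\colon a\mapsto ea-ae\mid e\in E\}$. A basis of $A$ is a $k$-basis $\mathcal B$ with $\mathcal B\subseteq\bigcup_{i,j}e_jAe_i$, $\{e_1,\dots,e_n\}\subseteq\mathcal B$, $\mathcal B\setminus\{e_1,\dots,e_n\}\subseteq\mathfrak r$. An element $f\in\mathsf{HH}^1(A)$ is diagonalizable (diagonal with respect to $\mathcal B$) if a derivation representing it is diagonalizable (diagonal with respect to the basis $\mathcal B$); this does not depend on the representative. A subset $D$ is diagonalizable if there is a single basis $\mathcal B$ of $A$ with respect to which every $f\in D$ is diagonal. *)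

theory Defs
  imports Main "HOL-Computational_Algebra.Polynomial"
begin

text \<open>The algebra A is the whole type 'a (a ring with 1), which is a k-vector space via
  the scalar multiplication sc, where k is the type 'k (a field).\<close>

definition alg_closed_field :: "'k::field itself \<Rightarrow> bool" where
  "alg_closed_field _ \<longleftrightarrow> (\<forall>p :: 'k poly. degree p \<ge> 1 \<longrightarrow> (\<exists>x. poly p x = 0))"

definition k_algebra :: "('k::field \<Rightarrow> 'a::ring_1 \<Rightarrow> 'a) \<Rightarrow> bool" where
  "k_algebra sc \<longleftrightarrow> vector_space sc \<and>
     (\<forall>c a b. sc c (a * b) = sc c a * b \<and> sc c (a * b) = a * sc c b)"

definition finite_dim_algebra :: "('k::field \<Rightarrow> 'a::ring_1 \<Rightarrow> 'a) \<Rightarrow> bool" where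
  "finite_dim_algebra sc \<longleftrightarrow> k_algebra sc \<and>
     (\<exists>S. finite S \<and> module.span sc S = UNIV)"

definition idempotent :: "'a::ring_1 \<Rightarrow> bool" where
  "idempotent x \<longleftrightarrow> x * x = x"

definition primitive_idempotent :: "'a::ring_1 \<Rightarrow> bool" where
  "primitive_idempotent x \<longleftrightarrow> idempotent x \<and> x \<noteq> 0 \<and>
     \<not> (\<exists>u v. idempotent u \<and> idempotent v \<and> u \<noteq> 0 \<and> v \<noteq> 0 \<and>
              u * v = 0 \<and> v * u = 0 \<and> x = u + v)"

definition complete_primitive_orthogonal_idempotents :: "nat \<Rightarrow> (nat \<Rightarrow> 'a::ring_1) \<Rightarrow> bool" where
  "complete_primitive_orthogonal_idempotents n e \<longleftrightarrow>
     (\<forall>i<n. primitive_idempotent (e i)) \<and>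
     (\<forall>i<n. \<forall>j<n. i \<noteq> j \<longrightarrow> e i * e j = 0) \<and>
     (\<Sum>i<n. e i) = 1"

definition left_ideal :: "'a::ring_1 set \<Rightarrow> bool" where
  "left_ideal I \<longleftrightarrow> 0 \<in> I \<and> (\<forall>x\<in>I. \<forall>y\<in>I. x + y \<in> I) \<and> (\<forall>x\<in>I. - x \<in> I) \<and>
     (\<forall>a. \<forall>x\<in>I. a * x \<in> I)"

definition maximal_left_ideal :: "'a::ring_1 set \<Rightarrow> bool" where
  "maximal_left_ideal I \<longleftrightarrow> left_ideal I \<and> I \<noteq> UNIV \<and>
     (\<forall>J. left_ideal J \<and> I \<subseteq> J \<longrightarrow> J = I \<or> J = UNIV)"

definition radical :: "'a::ring_1 set" where
  "radical = \<Inter> {I. maximal_left_ideal I}"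

definition radical_sq :: "('k::field \<Rightarrow> 'a::ring_1 \<Rightarrow> 'a) \<Rightarrow> 'a set" where
  "radical_sq sc = module.span sc {x * y | x y. x \<in> radical \<and> y \<in> radical}"

text \<open>Basic: the indecomposable projectives e_i A are pairwise non-isomorphic (as right A-modules).\<close>
definition basic_algebra :: "('k::field \<Rightarrow> 'a::ring_1 \<Rightarrow> 'a) \<Rightarrow> nat \<Rightarrow> (nat \<Rightarrow> 'a) \<Rightarrow> bool" where
  "basic_algebra sc n e \<longleftrightarrow>
     (\<forall>i<n. \<forall>j<n. i \<noteq> j \<longrightarrow>
        \<not> (\<exists>\<phi>. bij_betw \<phi> {e i * a | a. True} {e j * a | a. True} \<and>
               (\<forall>x\<in>{e i * a | a. True}. \<forall>y\<in>{e i * a | a. True}. \<phi> (x + y) = \<phi> x + \<phi> y) \<and>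
               (\<forall>x\<in>{e i * a | a. True}. \<forall>c. \<phi> (sc c x) = sc c (\<phi> x)) \<and>
               (\<forall>x\<in>{e i * a | a. True}. \<forall>a. \<phi> (x * a) = \<phi> x * a)))"

definition connected_algebra :: "'a::ring_1 itself \<Rightarrow> bool" where
  "connected_algebra _ \<longleftrightarrow> (0::'a) \<noteq> 1 \<and>
     (\<forall>c::'a. idempotent c \<and> (\<forall>a. c * a = a * c) \<longrightarrow> c = 0 \<or> c = 1)"

text \<open>Arrows of the ordinary quiver: there is an arrow i \<rightarrow> j iff e_j (r/r^2) e_i \<noteq> 0.\<close>
definition quiver_arrow :: "('k::field \<Rightarrow> 'a::ring_1 \<Rightarrow> 'a) \<Rightarrow> nat \<Rightarrow> (nat \<Rightarrow> 'a) \<Rightarrow> nat \<Rightarrow> nat \<Rightarrow> bool" where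
  "quiver_arrow sc n e i j \<longleftrightarrow> i < n \<and> j < n \<and>
     (\<exists>y\<in>radical. e j * y * e i \<notin> radical_sq sc)"

definition quiver_acyclic :: "('k::field \<Rightarrow> 'a::ring_1 \<Rightarrow> 'a) \<Rightarrow> nat \<Rightarrow> (nat \<Rightarrow> 'a) \<Rightarrow> bool" where
  "quiver_acyclic sc n e \<longleftrightarrow>
     (\<forall>i. (i, i) \<notin> {(i, j). quiver_arrow sc n e i j}\<^sup>+)"

definition Der0 :: "('k::field \<Rightarrow> 'a::ring_1 \<Rightarrow> 'a) \<Rightarrow> nat \<Rightarrow> (nat \<Rightarrow> 'a) \<Rightarrow> ('a \<Rightarrow> 'a) set" where
  "Der0 sc n e = {d. Vector_Spaces.linear sc sc d \<and>
      (\<forall>a b. d (a * b) = d a * b + a * d b) \<and> (\<forall>i<n. d (e i) = 0)}"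

definition Esub :: "('k::field \<Rightarrow> 'a::ring_1 \<Rightarrow> 'a) \<Rightarrow> nat \<Rightarrow> (nat \<Rightarrow> 'a) \<Rightarrow> 'a set" where
  "Esub sc n e = module.span sc (e ` {..<n})"

definition Int0 :: "('k::field \<Rightarrow> 'a::ring_1 \<Rightarrow> 'a) \<Rightarrow> nat \<Rightarrow> (nat \<Rightarrow> 'a) \<Rightarrow> ('a \<Rightarrow> 'a) set" where
  "Int0 sc n e = {(\<lambda>a. x * a - a * x) | x. x \<in> Esub sc n e}"

definition HH1_rel :: "('k::field \<Rightarrow> 'a::ring_1 \<Rightarrow> 'a) \<Rightarrow> nat \<Rightarrow> (nat \<Rightarrow> 'a) \<Rightarrow> (('a \<Rightarrow> 'a) \<times> ('a \<Rightarrow> 'a)) set" where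
  "HH1_rel sc n e = {(d, d'). d \<in> Der0 sc n e \<and> d' \<in> Der0 sc n e \<and>
                                  (\<lambda>a. d a - d' a) \<in> Int0 sc n e}"

definition HH1 :: "('k::field \<Rightarrow> 'a::ring_1 \<Rightarrow> 'a) \<Rightarrow> nat \<Rightarrow> (nat \<Rightarrow> 'a) \<Rightarrow> ('a \<Rightarrow> 'a) set set" where
  "HH1 sc n e = Der0 sc n e // HH1_rel sc n e"

definition HH1_class :: "('k::field \<Rightarrow> 'a::ring_1 \<Rightarrow> 'a) \<Rightarrow> nat \<Rightarrow> (nat \<Rightarrow> 'a) \<Rightarrow> ('a \<Rightarrow> 'a) \<Rightarrow> ('a \<Rightarrow> 'a) set" where
  "HH1_class sc n e d = HH1_rel sc n e `` {d}"

definition HH1_zero :: "('k::field \<Rightarrow> 'a::ring_1 \<Rightarrow> 'a) \<Rightarrow> nat \<Rightarrow> (nat \<Rightarrow> 'a) \<Rightarrow> ('a \<Rightarrow> 'a) set" where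
  "HH1_zero sc n e = HH1_class sc n e (\<lambda>_. 0)"

text \<open>Lie bracket induced by the commutator bracket on Der_0 (computed on chosen representatives).\<close>
definition HH1_bracket :: "('k::field \<Rightarrow> 'a::ring_1 \<Rightarrow> 'a) \<Rightarrow> nat \<Rightarrow> (nat \<Rightarrow> 'a) \<Rightarrow>
    ('a \<Rightarrow> 'a) set \<Rightarrow> ('a \<Rightarrow> 'a) set \<Rightarrow> ('a \<Rightarrow> 'a) set" where
  "HH1_bracket sc n e f g =
     (let d = (SOME d. d \<in> f); d' = (SOME d'. d' \<in> g)
      in HH1_class sc n e (\<lambda>a. d (d' a) - d' (d a)))"

definition is_vs_basis :: "('k::field \<Rightarrow> 'a::ring_1 \<Rightarrow> 'a) \<Rightarrow> 'a set \<Rightarrow> bool" where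
  "is_vs_basis sc B \<longleftrightarrow> module.independent sc B \<and> module.span sc B = UNIV"

definition diagonal_wrt :: "('k::field \<Rightarrow> 'a::ring_1 \<Rightarrow> 'a) \<Rightarrow> ('a \<Rightarrow> 'a) \<Rightarrow> 'a set \<Rightarrow> bool" where
  "diagonal_wrt sc d B \<longleftrightarrow> (\<forall>b\<in>B. \<exists>c. d b = sc c b)"

definition diagonalizable_map :: "('k::field \<Rightarrow> 'a::ring_1 \<Rightarrow> 'a) \<Rightarrow> ('a \<Rightarrow> 'a) \<Rightarrow> bool" where
  "diagonalizable_map sc d \<longleftrightarrow> (\<exists>B. is_vs_basis sc B \<and> diagonal_wrt sc d B)"

definition algebra_basis :: "('k::field \<Rightarrow> 'a::ring_1 \<Rightarrow> 'a) \<Rightarrow> nat \<Rightarrow> (nat \<Rightarrow> 'a) \<Rightarrow> 'a set \<Rightarrow> bool" where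
  "algebra_basis sc n e B \<longleftrightarrow> is_vs_basis sc B \<and>
     B \<subseteq> (\<Union>i<n. \<Union>j<n. {e j * a * e i | a. True}) \<and>
     e ` {..<n} \<subseteq> B \<and> B - e ` {..<n} \<subseteq> radical"

definition HH1_diagonalizable :: "('k::field \<Rightarrow> 'a::ring_1 \<Rightarrow> 'a) \<Rightarrow> ('a \<Rightarrow> 'a) set \<Rightarrow> bool" where
  "HH1_diagonalizable sc f \<longleftrightarrow> (\<exists>d\<in>f. diagonalizable_map sc d)"

definition HH1_diagonal_wrt :: "('k::field \<Rightarrow> 'a::ring_1 \<Rightarrow> 'a) \<Rightarrow> ('a \<Rightarrow> 'a) set \<Rightarrow> 'a set \<Rightarrow> bool" where
  "HH1_diagonal_wrt sc f B \<longleftrightarrow> (\<exists>d\<in>f. diagonal_wrt sc d B)"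

definition HH1_set_diagonalizable :: "('k::field \<Rightarrow> 'a::ring_1 \<Rightarrow> 'a) \<Rightarrow> nat \<Rightarrow> (nat \<Rightarrow> 'a) \<Rightarrow>
    ('a \<Rightarrow> 'a) set set \<Rightarrow> bool" where
  "HH1_set_diagonalizable sc n e D \<longleftrightarrow>
     (\<exists>B. algebra_basis sc n e B \<and> (\<forall>f\<in>D. HH1_diagonal_wrt sc f B))"

end

theory Submission
  imports Defs
begin

(*
  Since the quiver has no oriented cycles, the radical filtration shows e_i A e_i = k e_i, and
  basicness puts every e_j A e_i with j \<noteq> i into the radical; so A is the direct sum of its
  corners e_j A e_i, the diagonal ones spanned by the e_i.

  Derivations that are diagonal in a common basis commute, which gives one direction. For the
  other, take diagonalizable representatives d, d' of elements of D. A vanishing bracket means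
  [d, d'] = ad x with x in E, and ad x acts on e_j A e_i as a scalar \<mu>. If \<mu> \<noteq> 0, then d'
  sends an eigenvector of d in e_j A e_i to a generalized, hence genuine, eigenvector, which
  forces e_j A e_i = 0. So the representatives commute; as they preserve every corner, each
  off-diagonal corner has a common eigenbasis, and these bases together with the e_i form a
  basis of A in the required sense.
*)

definition nilpotent :: "'a::ring_1 \<Rightarrow> bool" where
  "nilpotent x \<longleftrightarrow> (\<exists>m. x ^ m = 0)"

lemma geometric_sum_mult_one_minus:
  fixes z :: "'a::ring_1"
  shows "(\<Sum>k<m. z ^ k) * (1 - z) = 1 - z ^ m"
proof (induction m)
  case (Suc m)
  have "(\<Sum>k<Suc m. z ^ k) * (1 - z) = 1 - z ^ m + z ^ m * (1 - z)"
    using Suc by (simp add: distrib_right)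
  also have "\<dots> = 1 - z ^ Suc m" by (simp add: algebra_simps power_Suc2 power_commutes)
  finally show ?case .
qed simp

lemma nilpotent_imp_left_invertible_one_minus:
  fixes z :: "'a::ring_1"
  assumes "nilpotent z"
  shows "\<exists>u. u * (1 - z) = 1"
proof -
  obtain m where "z ^ m = 0" using assms unfolding nilpotent_def by blast
  then show ?thesis using geometric_sum_mult_one_minus[of z m] by auto
qed

lemma left_ideal_eq_UNIV_if_one_mem:
  fixes I :: "'a::ring_1 set"
  assumes "left_ideal I" "1 \<in> I"
  shows "I = UNIV"
  using assms unfolding left_ideal_def by (metis UNIV_eq_I mult.right_neutral)

lemma left_ideal_add_principal:
  fixes M :: "'a::ring_1 set"
  assumes "left_ideal M"
  shows "left_ideal {m + b * x | m b. m \<in> M}"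
  unfolding left_ideal_def
proof (intro conjI ballI allI)
  have "0 \<in> M" using assms unfolding left_ideal_def by blast
  then have "0 + 0 * x \<in> {m + b * x | m b. m \<in> M}" by blast
  then show "0 \<in> {m + b * x | m b. m \<in> M}" by simp
next
  fix p q assume "p \<in> {m + b * x | m b. m \<in> M}" "q \<in> {m + b * x | m b. m \<in> M}"
  then obtain m1 b1 m2 b2 where "p = m1 + b1 * x" "q = m2 + b2 * x" "m1 \<in> M" "m2 \<in> M" by blast
  moreover have "m1 + m2 \<in> M" using assms calculation(3,4) unfolding left_ideal_def by blast
  moreover have "p + q = (m1 + m2) + (b1 + b2) * x" using calculation(1,2) by (simp add: algebra_simps)
  ultimately show "p + q \<in> {m + b * x | m b. m \<in> M}" by blast
next
  fix p assume "p \<in> {m + b * x | m b. m \<in> M}"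
  then obtain m1 b1 where "p = m1 + b1 * x" "m1 \<in> M" by blast
  moreover have "- m1 \<in> M" using assms calculation(2) unfolding left_ideal_def by blast
  moreover have "- p = (- m1) + (- b1) * x" using calculation(1) by simp
  ultimately show "- p \<in> {m + b * x | m b. m \<in> M}" by blast
next
  fix a p assume "p \<in> {m + b * x | m b. m \<in> M}"
  then obtain m1 b1 where "p = m1 + b1 * x" "m1 \<in> M" by blast
  moreover have "a * m1 \<in> M" using assms calculation(2) unfolding left_ideal_def by blast
  moreover have "a * p = a * m1 + (a * b1) * x" using calculation(1) by (simp add: algebra_simps)
  ultimately show "a * p \<in> {m + b * x | m b. m \<in> M}" by blast
qed

lemma maximal_left_ideal_exists:
  fixes I :: "'a::ring_1 set"
  assumes "left_ideal I" "1 \<notin> I"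
  shows "\<exists>M. maximal_left_ideal M \<and> I \<subseteq> M"
proof -
  define S where "S = {J. left_ideal J \<and> I \<subseteq> J \<and> (1::'a) \<notin> J}"
  have "\<exists>U\<in>S. \<forall>X\<in>C. X \<subseteq> U" if C: "C \<in> chains S" for C
  proof (cases "C = {}")
    case True
    then show ?thesis using assms by (auto simp: S_def)
  next
    case False
    have CS: "C \<subseteq> S" using chainsD2[OF C] .
    have "left_ideal (\<Union>C)" unfolding left_ideal_def
    proof (intro conjI ballI allI)
      show "0 \<in> \<Union>C" using False CS by (auto simp: S_def left_ideal_def)
    next
      fix x y assume "x \<in> \<Union>C" "y \<in> \<Union>C"
      then obtain X Y where XY: "X \<in> C" "Y \<in> C" "x \<in> X" "y \<in> Y" by auto
      from chainsD[OF C XY(1,2)] have "X \<subseteq> Y \<or> Y \<subseteq> X" .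
      then show "x + y \<in> \<Union>C" using XY CS unfolding S_def left_ideal_def by blast
    next
      fix x assume "x \<in> \<Union>C"
      then show "- x \<in> \<Union>C" using CS unfolding S_def left_ideal_def by blast
    next
      fix a x assume "x \<in> \<Union>C"
      then show "a * x \<in> \<Union>C" using CS unfolding S_def left_ideal_def by blast
    qed
    moreover have "I \<subseteq> \<Union>C" "1 \<notin> \<Union>C" using False CS by (auto simp: S_def)
    ultimately show ?thesis unfolding S_def by blast
  qed
  then obtain M where M: "M \<in> S" "\<forall>X\<in>S. M \<subseteq> X \<longrightarrow> X = M" using Zorn_Lemma2[of S] by blast
  have "J = M \<or> J = UNIV" if "left_ideal J" "M \<subseteq> J" for J
    using M that left_ideal_eq_UNIV_if_one_mem[of J] unfolding S_def by blast
  with M(1) show ?thesis unfolding S_def maximal_left_ideal_def by blast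
qed

lemma left_ideal_Inter: "(\<And>I. I \<in> F \<Longrightarrow> left_ideal I) \<Longrightarrow> left_ideal (\<Inter>F)"
  unfolding left_ideal_def by blast

lemma left_ideal_radical: "left_ideal (radical :: 'a::ring_1 set)"
  unfolding radical_def by (rule left_ideal_Inter) (simp add: maximal_left_ideal_def)

lemma left_invertible_one_minus_if_radical:
  fixes x :: "'a::ring_1"
  assumes x: "x \<in> radical"
  shows "\<exists>u. u * (1 - a * x) = 1"
proof (rule ccontr)
  assume "\<not> ?thesis"
  then have no_inv: "\<forall>u. u * (1 - a * x) \<noteq> 1" by blast
  define I where "I = {m + b * (1 - a * x) | m b. m \<in> {0::'a}}"
  have "left_ideal I"
    unfolding I_def by (rule left_ideal_add_principal) (simp add: left_ideal_def)
  moreover have "1 \<notin> I" using no_inv unfolding I_def by auto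
  ultimately obtain M where M: "maximal_left_ideal M" "I \<subseteq> M"
    using maximal_left_ideal_exists by blast
  then have LM: "left_ideal M" unfolding maximal_left_ideal_def by blast
  have "a * x \<in> M" using x M(1) LM unfolding radical_def left_ideal_def by blast
  moreover have "0 + 1 * (1 - a * x) \<in> I" unfolding I_def by blast
  then have "1 - a * x \<in> M" using M(2) by auto
  ultimately have "1 \<in> M" using LM unfolding left_ideal_def by (metis diff_add_cancel)
  then show False using M(1) left_ideal_eq_UNIV_if_one_mem unfolding maximal_left_ideal_def by blast
qed

lemma radical_if_left_invertible_one_minus:
  fixes x :: "'a::ring_1"
  assumes inv: "\<And>a. \<exists>u. u * (1 - a * x) = 1"
  shows "x \<in> radical"
proof (rule ccontr)
  assume "x \<notin> radical"
  then obtain M where M: "maximal_left_ideal M" "x \<notin> M" unfolding radical_def by blast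
  then have LM: "left_ideal M" unfolding maximal_left_ideal_def by blast
  define J where "J = {m + b * x | m b. m \<in> M}"
  have "left_ideal J" unfolding J_def by (rule left_ideal_add_principal[OF LM])
  moreover have "M \<subseteq> J" unfolding J_def by (force intro: exI[of _ 0])
  moreover have "0 + 1 * x \<in> J" using LM unfolding J_def left_ideal_def by blast
  then have "x \<in> J" by simp
  ultimately have "J = UNIV" using M unfolding maximal_left_ideal_def by blast
  then obtain m b where mb: "1 = m + b * x" "m \<in> M" unfolding J_def by blast
  obtain u where "u * (1 - b * x) = 1" using inv by blast
  then have "u * m = 1" using mb(1) by (metis add_diff_cancel_right')
  then have "1 \<in> M" using mb(2) LM unfolding left_ideal_def by metis
  then show False using M(1) left_ideal_eq_UNIV_if_one_mem unfolding maximal_left_ideal_def by blast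
qed

lemma radical_iff_left_invertible:
  fixes x :: "'a::ring_1"
  shows "x \<in> radical \<longleftrightarrow> (\<forall>a. \<exists>u. u * (1 - a * x) = 1)"
  using left_invertible_one_minus_if_radical radical_if_left_invertible_one_minus by blast

lemma radical_mult_left: "x \<in> radical \<Longrightarrow> a * x \<in> (radical :: 'a::ring_1 set)"
  using left_ideal_radical unfolding left_ideal_def by blast

lemma radical_add: "x \<in> radical \<Longrightarrow> y \<in> radical \<Longrightarrow> x + y \<in> (radical :: 'a::ring_1 set)"
  using left_ideal_radical unfolding left_ideal_def by blast

lemma zero_in_radical: "(0 :: 'a::ring_1) \<in> radical"
  using left_ideal_radical unfolding left_ideal_def by blast

lemma radical_mult_right:
  fixes x :: "'a::ring_1"
  assumes "x \<in> radical"
  shows "x * b \<in> radical"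
  unfolding radical_iff_left_invertible
proof
  fix a
  obtain w where w: "w * (1 - (b * a) * x) = 1" using assms unfolding radical_iff_left_invertible by blast
  have "(1 + a * x * w * b) * (1 - a * (x * b)) = 1 - a * x * b + a * x * (w * (1 - b * a * x)) * b"
    by (simp add: algebra_simps)
  also have "\<dots> = 1" using w by (simp add: mult.assoc)
  finally show "\<exists>u. u * (1 - a * (x * b)) = 1" by blast
qed

lemma power_idempotent_mult_commuting:
  fixes q y :: "'a::monoid_mult"
  assumes "q * q = q" "q * y = y * q" "m > 0"
  shows "(q * y) ^ m = q * y ^ m"
  using assms(3)
proof (induction m)
  case (Suc m)
  show ?case
  proof (cases "m = 0")
    case False
    then have "(q * y) ^ Suc m = q * y * (q * y ^ m)" using Suc by simp
    also have "\<dots> = q * q * y * y ^ m" by (metis assms(2) mult.assoc)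
    finally show ?thesis by (simp add: assms(1) mult.assoc)
  qed simp
qed simp

lemma left_multiple_of_nilpotent_eq_0:
  fixes q z :: "'a::ring_1"
  assumes "q * z = z" "t * z = q" "nilpotent z"
  shows "q = 0"
proof -
  have powers: "t ^ Suc k * z ^ Suc k = q" for k
  proof (induction k)
    case (Suc k)
    have "t ^ Suc (Suc k) * z ^ Suc (Suc k) = t ^ Suc k * (t * z) * z ^ Suc k"
      by (simp only: power_Suc2[of t "Suc k"] power_Suc[of z "Suc k"] mult.assoc)
    also have "\<dots> = t ^ Suc k * z ^ Suc k" using assms(1,2) by (metis mult.assoc power_Suc)
    finally show ?case using Suc by simp
  qed (use assms in simp)
  obtain m where "z ^ m = 0" using assms(3) unfolding nilpotent_def by blast
  then have "z ^ Suc m = 0" by simp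
  with powers[of m] show ?thesis by simp
qed

lemma primitive_idempotent_orthogonal_split:
  fixes q u w :: "'a::ring_1"
  assumes "primitive_idempotent q" "u + w = q" "u * w = 0" "w * u = 0" "u * q = u" "w * q = w"
  shows "u = 0 \<or> w = 0"
proof -
  have "u * u = u" "w * w = w"
    using assms(2-6) by (simp_all add: eq_diff_eq[symmetric] right_diff_distrib flip: distrib_left)
  then show ?thesis using assms(1-4) unfolding primitive_idempotent_def idempotent_def by auto
qed

lemma primitive_idempotent_eq_if_absorbs:
  fixes p q :: "'a::ring_1"
  assumes "primitive_idempotent q" "p * p = p" "p \<noteq> 0" "q * p = p" "p * q = p"
  shows "p = q"
proof -
  have "q * q = q" using assms(1) unfolding primitive_idempotent_def idempotent_def by blast
  then have "idempotent (q - p) \<and> p * (q - p) = 0 \<and> (q - p) * p = 0 \<and> q = p + (q - p)"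
    using assms(2,4,5) by (simp add: idempotent_def algebra_simps)
  then have "q - p = 0"
    using assms(1-3) unfolding primitive_idempotent_def idempotent_def by blast
  then show ?thesis by simp
qed

section \<open>Commuting diagonalizable operators\<close>

context finite_dimensional_vector_space
begin

interpretation endo: vector_space_pair scale scale ..

lemma eigencomponents_in_invariant_subspace:
  assumes "finite L" and W: "subspace W" and f: "Vector_Spaces.linear scale scale f"
    and inv: "\<And>w. w \<in> W \<Longrightarrow> f w \<in> W"
    and eigen: "\<And>l. l \<in> L \<Longrightarrow> f (u l) = l *s u l" and sum: "(\<Sum>l\<in>L. u l) \<in> W"
  shows "\<forall>l\<in>L. u l \<in> W"
  using assms(1) eigen sum
proof (induction L arbitrary: u rule: finite_induct)
  case (insert m L)
  define u' where "u' l = (l - m) *s u l" for l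
  have sum_W: "u m + (\<Sum>l\<in>L. u l) \<in> W" using insert by simp
  have "f (u m + (\<Sum>l\<in>L. u l)) = m *s u m + (\<Sum>l\<in>L. l *s u l)"
    using insert.prems(1) f by (simp add: endo.linear_add endo.linear_sum)
  then have "f (u m + (\<Sum>l\<in>L. u l)) - m *s (u m + (\<Sum>l\<in>L. u l))
      = (\<Sum>l\<in>L. l *s u l) - (\<Sum>l\<in>L. m *s u l)"
    by (simp add: scale_right_distrib scale_sum_right)
  also have "\<dots> = (\<Sum>l\<in>L. u' l)"
    unfolding u'_def by (simp add: sum_subtractf[symmetric] scale_left_diff_distrib)
  finally have "f (u m + (\<Sum>l\<in>L. u l)) - m *s (u m + (\<Sum>l\<in>L. u l)) = (\<Sum>l\<in>L. u' l)" .
  moreover have "f (u m + (\<Sum>l\<in>L. u l)) - m *s (u m + (\<Sum>l\<in>L. u l)) \<in> W"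
    using sum_W W inv by (simp add: subspace_diff subspace_scale)
  moreover have "\<forall>l\<in>L. f (u' l) = l *s u' l"
    using insert.prems(1) f unfolding u'_def by (simp add: endo.linear_scale mult.commute)
  ultimately have u'_W: "\<forall>l\<in>L. u' l \<in> W" using insert.IH by simp
  have u_W: "\<forall>l\<in>L. u l \<in> W"
  proof
    fix l assume "l \<in> L"
    then have "u l = (1 / (l - m)) *s u' l" using insert.hyps(2) unfolding u'_def by auto
    then show "u l \<in> W" using u'_W \<open>l \<in> L\<close> W by (simp add: subspace_scale)
  qed
  then have "u m \<in> W" using sum_W W subspace_sum[OF W, of L u] by (metis add_diff_cancel_right' subspace_diff)
  with u_W show ?case by simp
qed simp

lemma diagonal_eigendecomposition:
  assumes f: "Vector_Spaces.linear scale scale f"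
    and B: "independent B" "span B = UNIV" and diag: "\<forall>b\<in>B. \<exists>c. f b = c *s b"
    and W: "subspace W" and inv: "\<And>w. w \<in> W \<Longrightarrow> f w \<in> W" and w: "w \<in> W"
  shows "\<exists>L u. finite L \<and> w = (\<Sum>l\<in>L. u l) \<and> (\<forall>l\<in>L. f (u l) = l *s u l \<and> u l \<in> W)"
proof -
  obtain ev where ev: "\<forall>b\<in>B. f b = ev b *s b" using diag by metis
  have fin: "finite B" using B(1) by (rule finiteI_independent)
  obtain c where wc: "w = (\<Sum>b\<in>B. c b *s b)" using B(2) span_finite[OF fin] by blast
  define u where "u l = (\<Sum>b\<in>{b\<in>B. ev b = l}. c b *s b)" for l
  have L: "finite (ev ` B)" using fin by simp
  have wu: "w = (\<Sum>l\<in>ev ` B. u l)" unfolding wc u_def by (rule sum.image_gen[OF fin])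
  have eigen: "\<forall>l\<in>ev ` B. f (u l) = l *s u l"
    unfolding u_def using f ev
    by (simp add: endo.linear_sum endo.linear_scale scale_sum_right mult.commute)
  have "\<forall>l\<in>ev ` B. u l \<in> W"
    using eigencomponents_in_invariant_subspace[OF L W f inv] eigen wu w by auto
  with L wu eigen show ?thesis by blast
qed

lemma diagonal_generalized_eigenvector:
  assumes f: "Vector_Spaces.linear scale scale f"
    and B: "independent B" "span B = UNIV" and diag: "\<forall>b\<in>B. \<exists>c. f b = c *s b"
    and sq: "f (f w - l *s w) - l *s (f w - l *s w) = 0"
  shows "f w - l *s w = 0"
proof -
  have "\<exists>M u. finite M \<and> w = (\<Sum>\<mu>\<in>M. u \<mu>) \<and> (\<forall>\<mu>\<in>M. f (u \<mu>) = \<mu> *s u \<mu> \<and> u \<mu> \<in> UNIV)"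
    by (rule diagonal_eigendecomposition[OF f B diag subspace_UNIV]) simp_all
  then obtain M u where Mu: "finite M" "w = (\<Sum>\<mu>\<in>M. u \<mu>)" "\<forall>\<mu>\<in>M. f (u \<mu>) = \<mu> *s u \<mu>"
    by blast
  have shift: "f v - l *s v = (\<Sum>\<mu>\<in>M. ((\<mu> - l) * c \<mu>) *s u \<mu>)"
    if v: "v = (\<Sum>\<mu>\<in>M. c \<mu> *s u \<mu>)" for v c
  proof -
    have "f v = (\<Sum>\<mu>\<in>M. (\<mu> * c \<mu>) *s u \<mu>)"
      using v Mu(3) f by (simp add: endo.linear_sum endo.linear_scale mult.commute)
    moreover have "l *s v = (\<Sum>\<mu>\<in>M. (l * c \<mu>) *s u \<mu>)" using v by (simp add: scale_sum_right)
    ultimately show ?thesis by (simp add: sum_subtractf[symmetric] scale_left_diff_distrib left_diff_distrib)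
  qed
  have w1: "f w - l *s w = (\<Sum>\<mu>\<in>M. (\<mu> - l) *s u \<mu>)"
    using shift[of w "\<lambda>_. 1"] Mu(2) by simp
  have "(\<Sum>\<mu>\<in>M. ((\<mu> - l) * (\<mu> - l)) *s u \<mu>) = 0"
    using sq unfolding shift[OF w1] .
  moreover have "\<forall>\<mu>\<in>M. f (((\<mu> - l) * (\<mu> - l)) *s u \<mu>) = \<mu> *s (((\<mu> - l) * (\<mu> - l)) *s u \<mu>)"
    using Mu(3) f by (simp add: endo.linear_scale mult.commute)
  ultimately have "\<forall>\<mu>\<in>M. ((\<mu> - l) * (\<mu> - l)) *s u \<mu> \<in> {0}"
    by (intro eigencomponents_in_invariant_subspace[OF Mu(1) subspace_single_0 f])
      (auto simp: endo.linear_0[OF f])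
  then have "\<forall>\<mu>\<in>M. (\<mu> - l) *s u \<mu> = 0" by auto
  then show ?thesis unfolding w1 by (intro sum.neutral) blast
qed

lemma subspace_eigenspace:
  assumes "Vector_Spaces.linear scale scale f" "subspace W"
  shows "subspace {w \<in> W. f w = c *s w}"
proof -
  have "Vector_Spaces.linear scale scale (\<lambda>w. c *s w)"
    by (simp add: Vector_Spaces.linear_iff vector_space_axioms scale_right_distrib scale_left_commute)
  then have "subspace {w. f w - c *s w = 0}"
    by (rule endo.linear_subspace_kernel[OF endo.linear_compose_sub[OF assms(1)]])
  then show ?thesis using subspace_inter[OF assms(2)] by (simp add: Collect_conj_eq)
qed

lemma diagonal_eigenvector_eq_0_if_commutator_scalar:
  assumes f: "Vector_Spaces.linear scale scale f" and g: "Vector_Spaces.linear scale scale g"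
    and B: "independent B" "span B = UNIV" and diag: "\<forall>b\<in>B. \<exists>c. f b = c *s b"
    and eigen: "f v = l *s v" and comm: "f (g v) - g (f v) = \<mu> *s v" and "\<mu> \<noteq> 0"
  shows "v = 0"
proof -
  \<comment> \<open>g v is a generalized eigenvector of f, hence an eigenvector as f is diagonalizable.\<close>
  have gv: "f (g v) - l *s g v = \<mu> *s v" using comm eigen g by (simp add: endo.linear_scale)
  then have "f (f (g v) - l *s g v) - l *s (f (g v) - l *s g v) = 0"
    using f eigen by (simp add: endo.linear_scale scale_left_commute)
  then have "f (g v) - l *s g v = 0" by (rule diagonal_generalized_eigenvector[OF f B diag])
  then show ?thesis using gv \<open>\<mu> \<noteq> 0\<close> by simp
qed

lemma common_eigenvectors_span_invariant_subspace:
  assumes lin: "\<And>f. f \<in> F \<Longrightarrow> Vector_Spaces.linear scale scale f"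
    and diag: "\<And>f. f \<in> F \<Longrightarrow> \<exists>B. independent B \<and> span B = UNIV \<and> (\<forall>b\<in>B. \<exists>c. f b = c *s b)"
    and comm: "\<And>f g x. f \<in> F \<Longrightarrow> g \<in> F \<Longrightarrow> f (g x) = g (f x)"
    and "subspace W" and "\<And>f w. f \<in> F \<Longrightarrow> w \<in> W \<Longrightarrow> f w \<in> W"
  shows "W \<subseteq> span {v \<in> W. \<forall>f\<in>F. \<exists>c. f v = c *s v}"
  using assms(4,5)
proof (induction "dim W" arbitrary: W rule: less_induct)
  case less
  define common where "common = {v \<in> W. \<forall>f\<in>F. \<exists>c. f v = c *s v}"
  show ?case
  proof (cases "\<forall>f\<in>F. \<exists>c. \<forall>w\<in>W. f w = c *s w")
    case True
    then have "W \<subseteq> common" unfolding common_def by blast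
    then show ?thesis unfolding common_def[symmetric] using span_superset by blast
  next
    case False
    then obtain f where f: "f \<in> F" and not_scalar: "\<forall>c. \<exists>w\<in>W. f w \<noteq> c *s w" by blast
    obtain B where B: "independent B" "span B = UNIV" "\<forall>b\<in>B. \<exists>c. f b = c *s b"
      using diag[OF f] by blast
    define E where "E c = {w \<in> W. f w = c *s w}" for c
    have E_subspace: "subspace (E c)" for c
      unfolding E_def by (rule subspace_eigenspace[OF lin[OF f] less.prems(1)])
    have E_invariant: "g w \<in> E c" if "g \<in> F" "w \<in> E c" for g w c
      using that less.prems(2) comm[OF f] lin unfolding E_def by (auto simp: endo.linear_scale)
    have "dim (E c) < dim W" for c
    proof -
      have "E c \<subset> W" using not_scalar unfolding E_def by fastforce
      moreover have "span (E c) = E c" using E_subspace[of c] by (simp only: span_eq_iff)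
      moreover have "span W = W" using less.prems(1) by (simp only: span_eq_iff)
      ultimately have "span (E c) \<subset> span W" by metis
      then show ?thesis by (rule dim_psubset)
    qed
    then have E_span: "E c \<subseteq> span common" for c
    proof -
      have "E c \<subseteq> span {v \<in> E c. \<forall>f\<in>F. \<exists>c. f v = c *s v}"
        using less.hyps E_subspace E_invariant \<open>dim (E c) < dim W\<close> by blast
      also have "\<dots> \<subseteq> span common" by (rule span_mono) (auto simp: E_def common_def)
      finally show ?thesis .
    qed
    show ?thesis unfolding common_def[symmetric]
    proof
      fix w assume "w \<in> W"
      then obtain L u where Lu: "finite L" "w = (\<Sum>l\<in>L. u l)" "\<forall>l\<in>L. f (u l) = l *s u l \<and> u l \<in> W"
        using diagonal_eigendecomposition[OF lin[OF f] B less.prems(1) less.prems(2)[OF f]] by blast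
      have "\<forall>l\<in>L. u l \<in> E l" using Lu(3) unfolding E_def by auto
      then show "w \<in> span common" unfolding Lu(2) using E_span by (blast intro: span_sum)
    qed
  qed
qed

lemma diagonal_maps_commute:
  assumes f: "Vector_Spaces.linear scale scale f" and g: "Vector_Spaces.linear scale scale g"
    and B: "span B = UNIV" and diag: "\<forall>b\<in>B. \<exists>c. f b = c *s b" "\<forall>b\<in>B. \<exists>c. g b = c *s b"
  shows "f (g x) = g (f x)"
proof -
  have lin: "Vector_Spaces.linear scale scale (\<lambda>x. f (g x) - g (f x))"
    using endo.linear_compose_sub[OF Vector_Spaces.linear_compose[OF g f]
        Vector_Spaces.linear_compose[OF f g]]
    by (simp add: o_def)
  have zero: "f (g b) - g (f b) = 0" if "b \<in> B" for b
  proof -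
    from bspec[OF diag(1) that] obtain c where c: "f b = c *s b" ..
    from bspec[OF diag(2) that] obtain d where d: "g b = d *s b" ..
    show ?thesis using f g by (simp add: c d endo.linear_scale scale_left_commute)
  qed
  have "f (g x) - g (f x) = 0"
    by (rule endo.linear_eq_0_on_span[OF lin, of B x, OF zero]) (simp_all add: B)
  then show ?thesis by simp
qed

end

lemma poly_linear_power_bezout:
  fixes r :: "'k::field poly"
  assumes "poly r l \<noteq> 0"
  shows "\<exists>s t. s * [:-l, 1:] ^ m + t * r = 1"
proof (induction m)
  case 0
  show ?case by (intro exI[of _ 1] exI[of _ 0]) simp
next
  case (Suc m)
  define L where "L = [:-l, 1:]"
  from Suc obtain s t where IH: "s * L ^ m + t * r = 1" unfolding L_def by blast
  define s' where "s' = synthetic_div s l"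
  define r' where "r' = synthetic_div r l"
  define c where "c = poly s l / poly r l"
  have s: "s = L * s' + [:poly s l:]" unfolding L_def s'_def by (rule synthetic_div_correct'[symmetric])
  have r: "r = L * r' + [:poly r l:]" unfolding L_def r'_def by (rule synthetic_div_correct'[symmetric])
  have c: "[:c:] * [:poly r l:] = [:poly s l:]" unfolding c_def using assms by simp
  have "(s' - [:c:] * r') * L ^ Suc m + (t + [:c:] * L ^ m) * r
      = (L * s' + [:c:] * [:poly r l:]) * L ^ m + t * r + [:c:] * L ^ m * (r - (L * r' + [:poly r l:]))"
    by (simp add: algebra_simps)
  also have "\<dots> = s * L ^ m + t * r" using s r c by simp
  also have "\<dots> = 1" by (rule IH)
  finally show ?case unfolding L_def by blast
qed

text \<open>The basis is only a handle on the library of finite-dimensional vector spaces.\<close>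

locale fd_algebra = finite_dimensional_vector_space sc Basis
  for sc :: "'k::field \<Rightarrow> 'a::ring_1 \<Rightarrow> 'a" and Basis :: "'a set" +
  assumes scale_mult_left: "sc c a * b = sc c (a * b)"
    and scale_mult_right: "a * sc c b = sc c (a * b)"
begin

sublocale endo: vector_space_pair sc sc ..

lemma scale_eq_scale_one_mult: "sc c x = sc c 1 * x"
  using scale_mult_left[of c 1 x] by simp

lemma scale_one_commute: "sc c 1 * x = x * sc c 1"
  using scale_mult_left[of c 1 x] scale_mult_right[of x c 1] by simp

lemma power_scale: "(sc c x) ^ m = sc (c ^ m) (x ^ m)"
  by (induction m) (simp_all add: scale_mult_left scale_mult_right)

lemma nilpotent_scale: "nilpotent x \<Longrightarrow> nilpotent (sc c x)"
  unfolding nilpotent_def by (auto simp: power_scale)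

lemma subspace_left_ideal: "left_ideal I \<Longrightarrow> subspace I"
  unfolding subspace_def left_ideal_def by (metis scale_eq_scale_one_mult)

lemma subspace_radical: "subspace radical"
  by (rule subspace_left_ideal[OF left_ideal_radical])

lemma linear_mult_left: "Vector_Spaces.linear sc sc (\<lambda>x. a * x)"
  by (simp add: Vector_Spaces.linear_iff vector_space_axioms distrib_left scale_mult_right)

lemma linear_mult_right: "Vector_Spaces.linear sc sc (\<lambda>x. x * a)"
  by (simp add: Vector_Spaces.linear_iff vector_space_axioms distrib_right scale_mult_left)

lemma linear_sandwich: "Vector_Spaces.linear sc sc (\<lambda>x. a * x * b)"
  by (simp add: Vector_Spaces.linear_iff vector_space_axioms algebra_simps
      scale_mult_left scale_mult_right)

lemma linear_image_span_in_subspace: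
  assumes "Vector_Spaces.linear sc sc f" "subspace V" "\<And>s. s \<in> S \<Longrightarrow> f s \<in> V" "x \<in> span S"
  shows "f x \<in> V"
proof -
  have "span S \<subseteq> f -` V"
    using assms(1-3) by (intro span_minimal) (auto intro: endo.linear_subspace_vimage)
  then show ?thesis using assms(4) by blast
qed

definition peval :: "'a \<Rightarrow> 'k poly \<Rightarrow> 'a" where
  "peval z p = (\<Sum>k\<le>degree p. sc (coeff p k) (z ^ k))"

lemma peval_eq_sum_lessThan:
  assumes "degree p < m"
  shows "peval z p = (\<Sum>k<m. sc (coeff p k) (z ^ k))"
proof -
  have "(\<Sum>k<m. sc (coeff p k) (z ^ k)) = (\<Sum>k\<le>degree p. sc (coeff p k) (z ^ k))"
    by (rule sum.mono_neutral_right) (use assms in \<open>auto simp: coeff_eq_0\<close>)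
  then show ?thesis by (simp add: peval_def)
qed

lemma peval_0 [simp]: "peval z 0 = 0"
  by (simp add: peval_def)

lemma peval_add: "peval z (p + q) = peval z p + peval z q"
proof -
  define m where "m = Suc (degree p + degree q)"
  have "degree (p + q) < m" "degree p < m" "degree q < m"
    unfolding m_def using degree_add_le_max[of p q] by auto
  then show ?thesis by (simp add: peval_eq_sum_lessThan[of _ m] scale_left_distrib sum.distrib)
qed

lemma peval_smult: "peval z (smult c p) = sc c (peval z p)"
proof -
  define m where "m = Suc (degree p)"
  have "degree (smult c p) < m" "degree p < m" unfolding m_def using degree_smult_le[of c p] by auto
  then show ?thesis by (simp add: peval_eq_sum_lessThan[of _ m] scale_sum_right)
qed

lemma peval_pCons: "peval z (pCons c p) = sc c 1 + z * peval z p"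
proof -
  define m where "m = Suc (degree p)"
  have "degree (pCons c p) < Suc m" unfolding m_def using degree_pCons_le[of c p] by linarith
  then have "peval z (pCons c p) = (\<Sum>k<Suc m. sc (coeff (pCons c p) k) (z ^ k))"
    by (rule peval_eq_sum_lessThan)
  also have "\<dots> = sc c 1 + (\<Sum>k<m. sc (coeff p k) (z ^ Suc k))"
    by (subst sum.lessThan_Suc_shift) simp
  also have "(\<Sum>k<m. sc (coeff p k) (z ^ Suc k)) = z * (\<Sum>k<m. sc (coeff p k) (z ^ k))"
    by (simp add: sum_distrib_left scale_mult_right)
  also have "(\<Sum>k<m. sc (coeff p k) (z ^ k)) = peval z p"
    by (rule peval_eq_sum_lessThan[symmetric]) (simp add: m_def)
  finally show ?thesis .
qed

lemma peval_const: "peval z [:c:] = sc c 1"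
  by (simp add: peval_pCons)

lemma peval_1 [simp]: "peval z 1 = 1"
  by (simp add: one_pCons peval_pCons)

lemma peval_X_minus: "peval z [:-c, 1:] = z - sc c 1"
  by (simp add: peval_pCons)

lemma peval_mult: "peval z (p * q) = peval z p * peval z q"
  by (induction p rule: pCons_induct)
    (simp_all add: peval_add peval_smult peval_pCons distrib_right
      scale_eq_scale_one_mult[of _ "peval z q"] mult.assoc)

lemma peval_power: "peval z (p ^ m) = peval z p ^ m"
  by (induction m) (simp_all add: peval_mult)

lemma peval_monom: "peval z (monom c k) = sc c (z ^ k)"
  by (simp add: monom_altdef peval_smult peval_power peval_pCons)

lemma peval_sum: "peval z (sum f A) = (\<Sum>x\<in>A. peval z (f x))"
  by (induction A rule: infinite_finite_induct) (simp_all add: peval_add)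

lemma commute_peval:
  assumes "y * z = z * y"
  shows "y * peval z p = peval z p * y"
proof (induction p rule: pCons_induct)
  case (pCons c p)
  have "y * peval z (pCons c p) = sc c 1 * y + z * (y * peval z p)"
    by (simp add: peval_pCons distrib_left scale_one_commute assms flip: mult.assoc)
  also have "\<dots> = peval z (pCons c p) * y"
    by (simp add: pCons.IH peval_pCons distrib_right mult.assoc)
  finally show ?case .
qed simp

lemma exists_annihilating_poly: "\<exists>p. p \<noteq> 0 \<and> peval z p = 0"
proof -
  have from_coeffs: "\<exists>p. p \<noteq> 0 \<and> peval z p = 0"
    if "k \<le> N" "c k \<noteq> 0" "(\<Sum>j\<le>N. sc (c j) (z ^ j)) = 0" for N k and c :: "nat \<Rightarrow> 'k"
  proof -
    define p where "p = (\<Sum>j\<le>N. monom (c j) j)"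
    have "coeff p k = c k" unfolding p_def using that(1) by (rule coeff_sum_monom)
    then have "p \<noteq> 0" using that(2) by auto
    moreover have "peval z p = 0" unfolding p_def peval_sum peval_monom using that(3) .
    ultimately show ?thesis by blast
  qed
  define N where "N = dimension"
  show ?thesis
  proof (cases "inj_on (\<lambda>k. z ^ k) {..N}")
    case False
    then obtain a b where ab: "a \<le> N" "b \<le> N" "a \<noteq> b" "z ^ a = z ^ b"
      unfolding inj_on_def by auto
    define c :: "nat \<Rightarrow> 'k" where "c j = (if j = a then 1 else if j = b then -1 else 0)" for j
    have "(\<Sum>j\<le>N. sc (c j) (z ^ j)) = (\<Sum>j\<in>{a, b}. sc (c j) (z ^ j))"
      by (rule sum.mono_neutral_right) (use ab in \<open>auto simp: c_def\<close>)
    also have "\<dots> = 0" using ab by (simp add: c_def)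
    finally show ?thesis by (rule from_coeffs[OF ab(1), of c, rotated]) (simp add: c_def)
  next
    case True
    define P where "P = (\<lambda>k. z ^ k) ` {..N}"
    have "finite P" "card P > dim P"
      unfolding P_def using True dim_subset_UNIV[of "(\<lambda>k. z ^ k) ` {..N}"]
      by (simp_all add: card_image N_def)
    then have "dependent P" by (intro dependent_biggerset_general)
    then obtain u where u: "\<exists>v\<in>P. u v \<noteq> 0" "(\<Sum>v\<in>P. sc (u v) v) = 0"
      unfolding dependent_finite[OF \<open>finite P\<close>] by blast
    then obtain k where k: "k \<le> N" "u (z ^ k) \<noteq> 0" unfolding P_def by blast
    have "(\<Sum>j\<le>N. sc (u (z ^ j)) (z ^ j)) = 0"
      using u(2) sum.reindex[OF True, of "\<lambda>v. sc (u v) v"] unfolding P_def by simp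
    then show ?thesis by (rule from_coeffs[OF k(1), of "\<lambda>j. u (z ^ j)", OF k(2)])
  qed
qed

lemma primitive_idempotent_kills_coprime_factor:
  assumes prim: "primitive_idempotent q" and comm: "q * z = z * q"
    and bezout: "s * P + t * R = 1" and kills: "q * peval z (P * R) = 0"
  shows "q * peval z P = 0 \<or> q * peval z R = 0"
proof -
  have qq: "q * q = q" using prim unfolding primitive_idempotent_def idempotent_def by blast
  have q_peval: "q * peval z r = peval z r * q" for r by (rule commute_peval[OF comm])
  have q_peval_mult: "q * peval z (r * r') = peval z r * (q * peval z r')" for r r'
  proof -
    have "q * peval z (r * r') = (q * peval z r) * peval z r'" by (simp add: peval_mult mult.assoc)
    also have "\<dots> = peval z r * (q * peval z r')" by (simp add: q_peval mult.assoc)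
    finally show ?thesis .
  qed
  have kills_multiple: "q * peval z (r * (P * R)) = 0" for r
    unfolding q_peval_mult[of r "P * R"] kills by simp
  have q_mult: "(q * peval z r) * (q * peval z r') = q * peval z (r * r')" for r r'
  proof -
    have "(q * peval z r) * (q * peval z r') = q * (peval z r * q) * peval z r'"
      by (simp only: mult.assoc)
    also have "\<dots> = q * peval z (r * r')"
      by (simp only: q_peval[symmetric] peval_mult qq mult.assoc[symmetric])
    finally show ?thesis .
  qed
  define u where "u = q * peval z (t * R)"
  define w where "w = q * peval z (s * P)"
  \<comment> \<open>The Bezout identity splits q into the orthogonal idempotents u and w.\<close>
  have sum: "u + w = q"
    unfolding u_def w_def using arg_cong[OF bezout, of "peval z"]
    by (simp add: peval_add distrib_left[symmetric] add.commute)
  have "u * w = q * peval z ((t * s) * (P * R))" unfolding u_def w_def q_mult by (simp add: ac_simps)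
  moreover have "w * u = q * peval z ((s * t) * (P * R))" unfolding u_def w_def q_mult by (simp add: ac_simps)
  ultimately have prod: "u * w = 0" "w * u = 0" by (simp_all add: kills_multiple)
  have "u * q = u" "w * q = w"
    unfolding u_def w_def by (simp_all add: mult.assoc q_peval qq)
  then have "u = 0 \<or> w = 0" using primitive_idempotent_orthogonal_split[OF prim sum prod] by blast
  then show ?thesis
  proof
    assume "u = 0"
    have "q * peval z R = q * peval z (s * (P * R) + R * (t * R))"
      using arg_cong[OF bezout, of "\<lambda>p. q * peval z (R * p)"] by (simp add: algebra_simps)
    also have "\<dots> = peval z R * u"
      unfolding u_def by (simp only: peval_add distrib_left kills_multiple q_peval_mult[of R] add_0)
    finally show ?thesis using \<open>u = 0\<close> by simp
  next
    assume "w = 0"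
    have "q * peval z P = q * peval z (P * (s * P) + t * (P * R))"
      using arg_cong[OF bezout, of "\<lambda>p. q * peval z (P * p)"] by (simp add: algebra_simps)
    also have "\<dots> = peval z P * w"
      unfolding w_def by (simp only: peval_add distrib_left kills_multiple q_peval_mult[of P] add_0_right)
    finally show ?thesis using \<open>w = 0\<close> by simp
  qed
qed

lemma power_corner_shift:
  assumes "q * q = q" "q * z = z" "z * q = z" "m > 0"
  shows "(z - sc l q) ^ m = q * peval z ([:-l, 1:] ^ m)"
proof -
  have "(z - sc l q) ^ m = (q * (z - sc l 1)) ^ m"
    by (simp add: algebra_simps assms(2) scale_mult_right)
  also have "\<dots> = q * (z - sc l 1) ^ m"
    by (rule power_idempotent_mult_commuting[OF assms(1) _ assms(4)])
      (simp add: algebra_simps assms(2,3) scale_mult_left scale_mult_right)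
  finally show ?thesis by (simp add: peval_power peval_X_minus)
qed

lemma primitive_idempotent_kills_poly_imp_nilpotent_shift:
  assumes closed: "alg_closed_field TYPE('k)" and prim: "primitive_idempotent q"
    and z: "q * z = z" "z * q = z" and "p \<noteq> 0" "q * peval z p = 0"
  shows "\<exists>l. nilpotent (z - sc l q)"
  using assms(5,6)
proof (induction p rule: measure_induct_rule[where f = degree])
  case (less p)
  have qq: "q * q = q" and "q \<noteq> 0" using prim unfolding primitive_idempotent_def idempotent_def by auto
  show ?case
  proof (cases "degree p = 0")
    case True
    then obtain c where "p = [:c:]" "c \<noteq> 0" using less.prems(1) by (metis degree_eq_zeroE pCons_0_0)
    then show ?thesis using less.prems(2) \<open>q \<noteq> 0\<close> by (simp add: peval_const scale_mult_right)
  next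
    case False
    then obtain l where "poly p l = 0"
      using closed unfolding alg_closed_field_def by (metis One_nat_def Suc_leI neq0_conv)
    define L where "L = [:-l, 1:]"
    define a where "a = order l p"
    have "a > 0" using \<open>poly p l = 0\<close> less.prems(1) order_root unfolding a_def by blast
    obtain r where p: "p = L ^ a * r" and "\<not> L dvd r"
      using order_decomp[OF less.prems(1), of l] unfolding a_def L_def by blast
    then have "poly r l \<noteq> 0" unfolding L_def by (simp add: poly_eq_0_iff_dvd)
    then obtain s t where "s * L ^ a + t * r = 1" using poly_linear_power_bezout unfolding L_def by blast
    moreover have "q * z = z * q" using z by simp
    ultimately consider "q * peval z (L ^ a) = 0" | "q * peval z r = 0"
      using primitive_idempotent_kills_coprime_factor[OF prim] less.prems(2) p by blast
    then show ?thesis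
    proof cases
      case 1
      then have "(z - sc l q) ^ a = 0" using power_corner_shift[OF qq z \<open>a > 0\<close>] by (simp add: L_def)
      then show ?thesis unfolding nilpotent_def by blast
    next
      case 2
      have "r \<noteq> 0" using p less.prems(1) by auto
      then have "degree r < degree p"
        using p \<open>a > 0\<close> by (simp add: degree_mult_eq L_def degree_linear_power)
      then show ?thesis using less.IH \<open>r \<noteq> 0\<close> 2 by blast
    qed
  qed
qed

lemma primitive_corner_element_eq_scalar_plus_nilpotent:
  assumes "alg_closed_field TYPE('k)" "primitive_idempotent q" "q * z = z" "z * q = z"
  shows "\<exists>l. nilpotent (z - sc l q)"
proof -
  obtain p where "p \<noteq> 0" "peval z p = 0" using exists_annihilating_poly by blast
  then show ?thesis using primitive_idempotent_kills_poly_imp_nilpotent_shift[OF assms] by simp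
qed

definition left_combinations :: "'a set \<Rightarrow> 'a set" where
  "left_combinations G = {y. \<exists>a. y = (\<Sum>g\<in>G. a g * g)}"

lemma span_subset_left_combinations:
  assumes "finite G"
  shows "span G \<subseteq> left_combinations G"
proof
  fix y assume "y \<in> span G"
  then show "y \<in> left_combinations G"
  proof (induction rule: span_induct_alt)
    case base
    then show ?case unfolding left_combinations_def by (auto intro!: exI[of _ "\<lambda>_. 0"])
  next
    case (step c x y)
    then obtain a where a: "y = (\<Sum>g\<in>G. a g * g)" unfolding left_combinations_def by blast
    define b where "b g = (if g = x then sc c 1 else 0) + a g" for g
    have "(\<Sum>g\<in>G. b g * g) = (\<Sum>g\<in>G. (if g = x then sc c 1 * x else 0)) + y"
      unfolding b_def a
      by (simp add: distrib_right sum.distrib if_distrib[of "\<lambda>u. u * _"] cong: if_cong)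
    also have "\<dots> = sc c x + y"
      using step(1) assms by (simp add: sum.delta' scale_eq_scale_one_mult[symmetric])
    finally have "sc c x + y = (\<Sum>g\<in>G. b g * g)" by simp
    then show ?case unfolding left_combinations_def by (intro CollectI exI[of _ b])
  qed
qed

lemma radical_combination_of_generators:
  assumes "finite G" "M \<subseteq> left_combinations G"
    and "z \<in> span {x * y | x y. x \<in> radical \<and> y \<in> M}"
  shows "\<exists>\<rho>. (\<forall>g. \<rho> g \<in> radical) \<and> z = (\<Sum>g\<in>G. \<rho> g * g)"
  using assms(3)
proof (induction rule: span_induct_alt)
  case base
  show ?case by (rule exI[of _ "\<lambda>_. 0"]) (simp add: zero_in_radical)
next
  case (step c s z')
  then obtain x y where s: "s = x * y" "x \<in> radical" "y \<in> M" by blast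
  obtain a where a: "y = (\<Sum>g\<in>G. a g * g)" using s(3) assms(2) unfolding left_combinations_def by blast
  obtain \<rho> where \<rho>: "\<forall>g. \<rho> g \<in> radical" "z' = (\<Sum>g\<in>G. \<rho> g * g)" using step.IH by blast
  define \<rho>' where "\<rho>' g = sc c (x * a g) + \<rho> g" for g
  have "sc c s + z' = (\<Sum>g\<in>G. \<rho>' g * g)"
    unfolding \<rho>'_def s a \<rho>(2)
    by (simp add: sum_distrib_left scale_sum_right distrib_right sum.distrib scale_mult_left mult.assoc)
  moreover have "\<forall>g. \<rho>' g \<in> radical" unfolding \<rho>'_def
    using \<rho>(1) s(2) subspace_radical
    by (auto intro!: radical_add radical_mult_right subspace_scale)
  ultimately show ?case by blast
qed

lemma left_combinations_remove_generator:
  assumes fin: "finite G" and "g \<notin> G" and "insert g G \<subseteq> M"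
    and M: "M \<subseteq> left_combinations (insert g G)"
    and rad: "M \<subseteq> span {x * y | x y. x \<in> radical \<and> y \<in> M}"
  shows "M \<subseteq> left_combinations G"
proof
  obtain \<rho> where \<rho>: "\<forall>h. \<rho> h \<in> radical" "g = (\<Sum>h\<in>insert g G. \<rho> h * h)"
    using radical_combination_of_generators[OF _ M, of g] assms by blast
  then have "g = \<rho> g * g + (\<Sum>h\<in>G. \<rho> h * h)" using fin \<open>g \<notin> G\<close> by simp
  then have rest: "(1 - \<rho> g) * g = (\<Sum>h\<in>G. \<rho> h * h)" by (simp add: algebra_simps)
  obtain t where t: "t * (1 - 1 * \<rho> g) = 1" using \<rho>(1) unfolding radical_iff_left_invertible by blast
  have g: "g = (\<Sum>h\<in>G. (t * \<rho> h) * h)"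
  proof -
    have "g = t * ((1 - \<rho> g) * g)" using t by (simp add: mult.assoc[symmetric])
    also have "\<dots> = (\<Sum>h\<in>G. (t * \<rho> h) * h)" by (simp add: rest sum_distrib_left mult.assoc)
    finally show ?thesis .
  qed
  fix m assume "m \<in> M"
  then obtain a where "m = (\<Sum>h\<in>insert g G. a h * h)"
    using M unfolding left_combinations_def by blast
  then have "m = a g * g + (\<Sum>h\<in>G. a h * h)" using fin \<open>g \<notin> G\<close> by simp
  also have "\<dots> = (\<Sum>h\<in>G. (a g * (t * \<rho> h) + a h) * h)"
    by (subst g) (simp add: sum_distrib_left distrib_right sum.distrib mult.assoc)
  finally show "m \<in> left_combinations G"
    unfolding left_combinations_def by (intro CollectI exI[of _ "\<lambda>h. a g * (t * \<rho> h) + a h"])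
qed

lemma nakayama:
  assumes "subspace M" and rad: "M \<subseteq> span {x * y | x y. x \<in> radical \<and> y \<in> M}"
  shows "M \<subseteq> {0}"
proof -
  have "G \<subseteq> M \<longrightarrow> M \<subseteq> left_combinations G \<longrightarrow> M \<subseteq> {0}" if "finite G" for G
    using that
  proof (induction G rule: finite_induct)
    case empty
    then show ?case by (simp add: left_combinations_def)
  next
    case (insert g G)
    then show ?case using left_combinations_remove_generator[OF insert(1,2) _ _ rad] by blast
  qed
  moreover obtain G where "G \<subseteq> M" "independent G" "M \<subseteq> span G"
    using maximal_independent_subset[of M] by blast
  moreover have "finite G" using \<open>independent G\<close> by (rule finiteI_independent)
  ultimately show ?thesis using span_subset_left_combinations by blast
qed

end

section \<open>Corners of a basic algebra\<close>

locale idempotent_decomposition = fd_algebra sc Basis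
  for sc :: "'k::field \<Rightarrow> 'a::ring_1 \<Rightarrow> 'a" and Basis +
  fixes n :: nat and e :: "nat \<Rightarrow> 'a"
  assumes complete: "complete_primitive_orthogonal_idempotents n e"
begin

lemma primitive_e: "i < n \<Longrightarrow> primitive_idempotent (e i)"
  using complete unfolding complete_primitive_orthogonal_idempotents_def by blast

lemma e_mult_e: "i < n \<Longrightarrow> j < n \<Longrightarrow> e i * e j = (if i = j then e i else 0)"
  using complete
  unfolding complete_primitive_orthogonal_idempotents_def primitive_idempotent_def idempotent_def
  by auto

lemma idempotent_e [simp]: "i < n \<Longrightarrow> e i * e i = e i"
  by (simp add: e_mult_e)

lemma e_nonzero: "i < n \<Longrightarrow> e i \<noteq> 0"
  using primitive_e unfolding primitive_idempotent_def by blast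

lemma sum_e: "(\<Sum>i<n. e i) = 1"
  using complete unfolding complete_primitive_orthogonal_idempotents_def by blast

lemma peirce_decomposition: "a = (\<Sum>j<n. \<Sum>i<n. e j * a * e i)"
proof -
  have "a = (\<Sum>j<n. e j) * a * (\<Sum>i<n. e i)" by (simp add: sum_e)
  also have "\<dots> = (\<Sum>j<n. e j * a * (\<Sum>i<n. e i))" by (simp add: sum_distrib_right)
  also have "\<dots> = (\<Sum>j<n. \<Sum>i<n. e j * a * e i)" by (simp add: sum_distrib_left)
  finally show ?thesis .
qed

lemma sandwich_mult_eq_sum: "e j * (y * z) * e l = (\<Sum>a<n. (e j * y * e a) * (e a * z * e l))"
proof -
  have ee: "e a * (e a * x) = e a * x" if "a < n" for a x using that by (simp flip: mult.assoc)
  have "e j * (y * z) * e l = e j * y * (\<Sum>a<n. e a * e a) * z * e l" by (simp add: sum_e mult.assoc)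
  then show ?thesis by (simp add: sum_distrib_left sum_distrib_right mult.assoc ee)
qed

definition corner :: "nat \<Rightarrow> nat \<Rightarrow> 'a set" where
  "corner j i = {x. e j * x = x \<and> x * e i = x}"

lemma sandwich_in_corner: "j < n \<Longrightarrow> i < n \<Longrightarrow> e j * a * e i \<in> corner j i"
  unfolding corner_def by (simp add: mult.assoc[symmetric]) (simp add: mult.assoc)

lemma corner_eq: "j < n \<Longrightarrow> i < n \<Longrightarrow> corner j i = {e j * a * e i | a. True}"
proof (intro subset_antisym subsetI)
  fix x assume "x \<in> corner j i"
  then have "x = e j * x * e i" unfolding corner_def by simp
  then show "x \<in> {e j * a * e i | a. True}" by blast
qed (use sandwich_in_corner in blast)

lemma corner_mult: "x \<in> corner k j \<Longrightarrow> y \<in> corner j i \<Longrightarrow> x * y \<in> corner k i"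
  unfolding corner_def by (simp add: mult.assoc flip: mult.assoc[of "e k"])

lemma corner_project:
  assumes "j < n" "i < n" "j' < n" "i' < n" "x \<in> corner j' i'"
  shows "e j * x * e i = (if j = j' \<and> i = i' then x else 0)"
proof -
  have x: "e j' * x = x" "x * e i' = x" using assms(5) unfolding corner_def by auto
  have "e j * x * e i = e j * (e j' * x * e i') * e i" by (simp add: x)
  also have "\<dots> = (e j * e j') * x * (e i' * e i)" by (simp add: mult.assoc)
  finally show ?thesis using assms(1-4) by (simp add: e_mult_e x)
qed

lemma subspace_corner: "subspace (corner j i)"
  unfolding corner_def subspace_def
  by (simp add: distrib_left distrib_right scale_mult_left scale_mult_right)

lemma corner_left_invertible_if_not_nilpotent:
  assumes closed: "alg_closed_field TYPE('k)" and "i < n" "z \<in> corner i i" "\<not> nilpotent z"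
  shows "\<exists>w. w * z = e i \<and> e i * w = w"
proof -
  define q where "q = e i"
  have qq: "q * q = q" and qz: "q * z = z" "z * q = z"
    using assms(2,3) unfolding q_def corner_def by auto
  obtain l where nil: "nilpotent (z - sc l q)"
    using primitive_corner_element_eq_scalar_plus_nilpotent[OF closed primitive_e[OF assms(2)]
        qz[unfolded q_def]]
    unfolding q_def by blast
  with assms(4) have "l \<noteq> 0" by auto
  \<comment> \<open>Write z = l (q - m) with m nilpotent; then q - m is invertible in the corner q A q.\<close>
  define m where "m = sc (- 1 / l) (z - sc l q)"
  have z_eq: "z = sc l (q - m)" unfolding m_def using \<open>l \<noteq> 0\<close> by (simp add: scale_right_diff_distrib)
  obtain t where t: "t * (1 - m) = 1"
    using nilpotent_imp_left_invertible_one_minus[OF nilpotent_scale[OF nil]] unfolding m_def by blast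
  have "m * q = m" unfolding m_def by (simp add: scale_mult_left left_diff_distrib qz qq)
  then have "(1 - m) * q = q - m" by (simp add: left_diff_distrib)
  then have "t * (q - m) = (t * (1 - m)) * q" by (simp add: mult.assoc)
  then have "t * (q - m) = q" using t by simp
  define w where "w = sc (1 / l) (q * t)"
  have "w * z = q" unfolding w_def z_eq using \<open>l \<noteq> 0\<close> \<open>t * (q - m) = q\<close> qq
    by (simp add: scale_mult_left scale_mult_right mult.assoc)
  moreover have "q * w = w" unfolding w_def by (simp add: scale_mult_right qq flip: mult.assoc)
  ultimately show ?thesis unfolding q_def by blast
qed

lemma corner_in_radical_if_products_nilpotent:
  assumes "i < n" "j < n" and x: "x \<in> corner j i"
    and nil: "\<And>y. y \<in> corner i j \<Longrightarrow> nilpotent (y * x)"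
  shows "x \<in> radical"
  unfolding radical_iff_left_invertible
proof
  fix b
  define y where "y = e i * b * e j"
  obtain m where m: "(y * x) ^ m = 0"
    using nil[OF sandwich_in_corner[OF assms(1,2)]] unfolding y_def nilpotent_def by blast
  have "x * b * x = (x * e i) * b * (e j * x)" using x unfolding corner_def by simp
  then have xbx: "x * b * x = x * y * x" unfolding y_def by (simp add: mult.assoc)
  have "(b * x) ^ Suc k = b * (x * (y * x) ^ k)" for k
  proof (induction k)
    case (Suc k)
    have "(b * x) ^ Suc (Suc k) = b * x * (b * (x * (y * x) ^ k))"
      using Suc by (simp only: power_Suc)
    also have "\<dots> = b * ((x * b * x) * (y * x) ^ k)" by (simp only: mult.assoc)
    also have "\<dots> = b * ((x * y * x) * (y * x) ^ k)" by (simp only: xbx)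
    also have "\<dots> = b * (x * (y * x) ^ Suc k)" by (simp only: power_Suc mult.assoc)
    finally show ?case .
  qed simp
  then have "(b * x) ^ Suc m = 0" using m by simp
  then have "nilpotent (b * x)" unfolding nilpotent_def by blast
  then show "\<exists>u. u * (1 - b * x) = 1" by (rule nilpotent_imp_left_invertible_one_minus)
qed

end

locale basic_fd_algebra = idempotent_decomposition sc Basis n e
  for sc :: "'k::field \<Rightarrow> 'a::ring_1 \<Rightarrow> 'a" and Basis n e +
  assumes closed: "alg_closed_field TYPE('k)" and basic: "basic_algebra sc n e"
begin

lemma eq_if_equivalent_idempotents:
  assumes ij: "i < n" "j < n" and u: "u \<in> corner j i" and v: "v \<in> corner i j"
    and vu: "v * u = e i" and uv: "u * v = e j"
  shows "i = j"
proof (rule ccontr)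
  assume "i \<noteq> j"
  define A where "A k = {e k * a | a. True}" for k
  have u': "e j * u = u" "u * e i = u" and v': "e i * v = v" using u v unfolding corner_def by auto
  have fix_i: "e i * z = z" if "z \<in> A i" for z
    using that ij(1) unfolding A_def by (auto simp flip: mult.assoc)
  have "inj_on (\<lambda>z. u * z) (A i)"
  proof (rule inj_onI)
    fix z z' assume "z \<in> A i" "z' \<in> A i" "u * z = u * z'"
    then have "v * u * z = v * u * z'" by (simp add: mult.assoc)
    then show "z = z'" using vu fix_i \<open>z \<in> A i\<close> \<open>z' \<in> A i\<close> by simp
  qed
  moreover have "(\<lambda>z. u * z) ` A i = A j"
  proof (intro subset_antisym subsetI)
    fix y assume "y \<in> (\<lambda>z. u * z) ` A i"
    then obtain a where "y = u * (e i * a)" unfolding A_def by blast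
    then have "y = e j * (u * a)" using u' by (simp flip: mult.assoc)
    then show "y \<in> A j" unfolding A_def by blast
  next
    fix y assume "y \<in> A j"
    then obtain a where "y = e j * a" unfolding A_def by blast
    then have "y = u * (e i * (v * a))" using uv v' by (simp flip: mult.assoc)
    then show "y \<in> (\<lambda>z. u * z) ` A i" unfolding A_def by blast
  qed
  ultimately have "bij_betw (\<lambda>z. u * z) (A i) (A j)" unfolding bij_betw_def by blast
  moreover have "\<forall>x\<in>A i. \<forall>y\<in>A i. u * (x + y) = u * x + u * y" by (simp add: distrib_left)
  moreover have "\<forall>x\<in>A i. \<forall>c. u * sc c x = sc c (u * x)" by (simp add: scale_mult_right)
  moreover have "\<forall>x\<in>A i. \<forall>a. u * (x * a) = u * x * a" by (simp add: mult.assoc)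
  ultimately show False using basic ij \<open>i \<noteq> j\<close> unfolding basic_algebra_def A_def by blast
qed

lemma off_diagonal_corner_subset_radical:
  assumes ij: "i < n" "j < n" "i \<noteq> j"
  shows "corner j i \<subseteq> radical"
proof
  fix x assume x: "x \<in> corner j i"
  show "x \<in> radical"
  proof (rule corner_in_radical_if_products_nilpotent[OF ij(1,2) x])
    fix y assume y: "y \<in> corner i j"
    show "nilpotent (y * x)"
    proof (rule ccontr)
      assume "\<not> nilpotent (y * x)"
      moreover have "y * x \<in> corner i i" using y x by (rule corner_mult)
      ultimately obtain w where w: "w * (y * x) = e i" "e i * w = w"
        using corner_left_invertible_if_not_nilpotent[OF closed ij(1)] by blast
      \<comment> \<open>v x = e_i, and primitivity of e_j forces x v = e_j: e_i and e_j would be equivalent.\<close>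
      define v where "v = w * y"
      have v: "v \<in> corner i j"
        using w(2) y unfolding v_def corner_def by (simp add: mult.assoc flip: mult.assoc[of "e i"])
      have vx: "v * x = e i" unfolding v_def using w(1) by (simp add: mult.assoc)
      have "x * v \<in> corner j j" using x v by (rule corner_mult)
      moreover have "x * v * (x * v) = x * v"
      proof -
        have "x * v * (x * v) = (x * (v * x)) * v" by (simp add: mult.assoc)
        also have "\<dots> = x * v" using x by (simp add: vx corner_def)
        finally show ?thesis .
      qed
      moreover have "x * v \<noteq> 0"
      proof
        assume "x * v = 0"
        moreover have "v * (x * v) * x = (v * x) * (v * x)" by (simp add: mult.assoc)
        ultimately have "e i * e i = 0" by (simp add: vx)
        then show False using e_nonzero[OF ij(1)] ij(1) by simp
      qed
      ultimately have "x * v = e j"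
        using primitive_idempotent_eq_if_absorbs[OF primitive_e[OF ij(2)]] unfolding corner_def by blast
      then show False using eq_if_equivalent_idempotents[OF ij(1,2) x v vx] ij(3) by blast
    qed
  qed
qed

lemma nilpotent_corner_in_radical:
  assumes i: "i < n" and x: "x \<in> corner i i" and "nilpotent x"
  shows "x \<in> radical"
proof (rule corner_in_radical_if_products_nilpotent[OF i i x])
  fix y assume y: "y \<in> corner i i"
  show "nilpotent (y * x)"
  proof (rule ccontr)
    assume "\<not> nilpotent (y * x)"
    moreover have "y * x \<in> corner i i" using y x by (rule corner_mult)
    ultimately obtain w where "w * (y * x) = e i"
      using corner_left_invertible_if_not_nilpotent[OF closed i] by blast
    then have "e i = 0"
      using left_multiple_of_nilpotent_eq_0[of "e i" x "w * y"] x \<open>nilpotent x\<close>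
      unfolding corner_def by (simp add: mult.assoc)
    then show False using e_nonzero[OF i] by simp
  qed
qed

end

section \<open>The radical filtration over an acyclic quiver\<close>

lemma relpow_eq_empty_if_acyclic:
  assumes R: "R \<subseteq> {..<n} \<times> {..<n}" and acyclic: "\<forall>i. (i, i) \<notin> R\<^sup>+" and "n \<le> k" "0 < k"
  shows "R ^^ k = {}"
proof (rule ccontr)
  assume "R ^^ k \<noteq> {}"
  then obtain a b where "(a, b) \<in> R ^^ k" by auto
  then obtain f where f: "\<And>i. i < k \<Longrightarrow> (f i, f (Suc i)) \<in> R" unfolding relpow_fun_conv by blast
  \<comment> \<open>A path with k + 1 \<ge> n + 1 vertices in {..<n} visits some vertex twice.\<close>
  have "f i \<in> {..<n}" if "i \<le> k" for i
  proof (cases "i < k")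
    case True
    then show ?thesis using f[OF True] R by auto
  next
    case False
    then have "i = Suc (k - 1)" "k - 1 < k" using that \<open>0 < k\<close> by auto
    then show ?thesis using f[of "k - 1"] R by auto
  qed
  then have "card (f ` {..k}) \<le> n" using card_mono[of "{..<n}" "f ` {..k}"] by auto
  then have "\<not> inj_on f {..k}" using \<open>n \<le> k\<close> by (auto dest: card_image)
  then obtain s t where "s \<le> k" "t \<le> k" "s \<noteq> t" "f s = f t" unfolding inj_on_def by auto
  then obtain s t where st: "s < t" "t \<le> k" "f s = f t"
    by (cases "s < t") (auto, metis nat_neq_iff)
  have "(f s, f t) \<in> R ^^ (t - s)"
    unfolding relpow_fun_conv by (rule exI[of _ "\<lambda>i. f (s + i)"]) (use st f in auto)
  then have "(f s, f t) \<in> R\<^sup>+" unfolding trancl_power using st by (auto intro: exI[of _ "t - s"])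
  then show False using acyclic st(3) by simp
qed

context fd_algebra
begin

text \<open>Note the shift: radical_power m is r^(m+1), and radical_sq sc is radical_power 1.\<close>

fun radical_power :: "nat \<Rightarrow> 'a set" where
  "radical_power 0 = radical"
| "radical_power (Suc m) = span {x * y | x y. x \<in> radical \<and> y \<in> radical_power m}"

declare radical_power.simps(2) [simp del]

lemma subspace_radical_power: "subspace (radical_power m)"
  by (cases m) (simp_all add: subspace_radical radical_power.simps)

lemma mult_in_radical_power: "x \<in> radical \<Longrightarrow> y \<in> radical_power m \<Longrightarrow> x * y \<in> radical_power (Suc m)"
  unfolding radical_power.simps by (auto intro: span_base)

lemma radical_power_mult_left: "y \<in> radical_power m \<Longrightarrow> a * y \<in> radical_power m"
proof (induction m arbitrary: y)
  case (Suc m)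
  show ?case
  proof (rule linear_image_span_in_subspace[OF linear_mult_left subspace_radical_power])
    fix s assume "s \<in> {x * y | x y. x \<in> radical \<and> y \<in> radical_power m}"
    then obtain x y where "s = x * y" "x \<in> radical" "y \<in> radical_power m" by blast
    then show "a * s \<in> radical_power (Suc m)"
      by (simp only: mult.assoc[symmetric] mult_in_radical_power radical_mult_left)
  qed (use Suc.prems in \<open>simp add: radical_power.simps\<close>)
qed (simp add: radical_mult_left)

lemma radical_power_mult_right: "y \<in> radical_power m \<Longrightarrow> y * a \<in> radical_power m"
proof (induction m arbitrary: y)
  case (Suc m)
  show ?case
  proof (rule linear_image_span_in_subspace[OF linear_mult_right subspace_radical_power])
    fix s assume "s \<in> {x * y | x y. x \<in> radical \<and> y \<in> radical_power m}"
    then obtain x y where "s = x * y" "x \<in> radical" "y \<in> radical_power m" by blast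
    then show "s * a \<in> radical_power (Suc m)" by (simp only: mult.assoc mult_in_radical_power Suc.IH)
  qed (use Suc.prems in \<open>simp add: radical_power.simps\<close>)
qed (simp add: radical_mult_right)

lemma radical_sq_mult_radical_power:
  assumes "x \<in> radical_sq sc" "y \<in> radical_power m"
  shows "x * y \<in> radical_power (Suc (Suc m))"
proof (rule linear_image_span_in_subspace[OF linear_mult_right subspace_radical_power])
  fix s :: 'a assume "s \<in> {x * y | x y. x \<in> radical \<and> y \<in> radical}"
  then obtain x1 x2 where "s = x1 * x2" "x1 \<in> radical" "x2 \<in> radical" by blast
  then show "s * y \<in> radical_power (Suc (Suc m))" using assms(2) by (simp only: mult.assoc mult_in_radical_power)
qed (use assms(1) in \<open>simp add: radical_sq_def radical_power.simps\<close>)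

end

context idempotent_decomposition
begin

definition quiver :: "(nat \<times> nat) set" where
  "quiver = {(i, j). quiver_arrow sc n e i j}"

lemma quiver_subset: "quiver \<subseteq> {..<n} \<times> {..<n}"
  unfolding quiver_def quiver_arrow_def by auto

lemma sandwich_radical_power:
  assumes "j < n" "l < n" "(l, j) \<notin> quiver ^^ Suc m" "x \<in> radical_power m"
  shows "e j * x * e l \<in> radical_power (Suc m)"
  using assms
proof (induction m arbitrary: j l x)
  case 0
  then show ?case unfolding quiver_def quiver_arrow_def radical_sq_def by (auto simp: radical_power.simps)
next
  case (Suc m)
  show ?case
  proof (rule linear_image_span_in_subspace[OF linear_sandwich subspace_radical_power])
    fix s assume "s \<in> {x * y | x y. x \<in> radical \<and> y \<in> radical_power m}"
    then obtain y z where s: "s = y * z" "y \<in> radical" "z \<in> radical_power m" by blast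
    \<comment> \<open>Treat each path l \<rightarrow> a \<rightarrow> j through an intermediate vertex a separately.\<close>
    have "e j * s * e l = (\<Sum>a<n. (e j * y * e a) * (e a * z * e l))"
      unfolding s(1) by (rule sandwich_mult_eq_sum)
    moreover have "(e j * y * e a) * (e a * z * e l) \<in> radical_power (Suc (Suc m))" if "a < n" for a
    proof (cases "(l, a) \<in> quiver ^^ Suc m")
      case True
      then have "(a, j) \<notin> quiver" using Suc.prems(3) by auto
      then have "e j * y * e a \<in> radical_sq sc"
        using Suc.prems(1) \<open>a < n\<close> s(2) unfolding quiver_def quiver_arrow_def by auto
      moreover have "e a * z * e l \<in> radical_power m"
        using s(3) by (simp add: radical_power_mult_left radical_power_mult_right)
      ultimately show ?thesis by (rule radical_sq_mult_radical_power)
    next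
      case False
      have "e j * y * e a \<in> radical" using s(2) by (simp add: radical_mult_left radical_mult_right)
      moreover have "e a * z * e l \<in> radical_power (Suc m)"
        using False Suc.IH \<open>a < n\<close> Suc.prems(2) s(3) by blast
      ultimately show ?thesis by (rule mult_in_radical_power)
    qed
    ultimately show "e j * s * e l \<in> radical_power (Suc (Suc m))"
      using subspace_sum[OF subspace_radical_power, of "{..<n}"] by simp
  qed (use Suc.prems(4) in \<open>simp add: radical_power.simps\<close>)
qed

end

locale acyclic_basic_algebra = basic_fd_algebra sc Basis n e
  for sc :: "'k::field \<Rightarrow> 'a::ring_1 \<Rightarrow> 'a" and Basis n e +
  assumes acyclic: "quiver_acyclic sc n e"
begin

lemma no_cycles: "(i, i) \<notin> quiver ^^ Suc m"
  using acyclic unfolding quiver_acyclic_def quiver_def by (metis trancl_power zero_less_Suc)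

lemma radical_power_eq_0: "radical_power n \<subseteq> {0}"
proof (rule nakayama[OF subspace_radical_power])
  have "quiver ^^ Suc n = {}"
    by (rule relpow_eq_empty_if_acyclic[OF quiver_subset])
      (use acyclic in \<open>simp_all add: quiver_acyclic_def quiver_def\<close>)
  have "x \<in> radical_power (Suc n)" if x: "x \<in> radical_power n" for x
  proof -
    have "e j * x * e l \<in> radical_power (Suc n)" if "j < n" "l < n" for j l
      using sandwich_radical_power[OF that(1,2) _ x] \<open>quiver ^^ Suc n = {}\<close> by blast
    then have "(\<Sum>j<n. \<Sum>l<n. e j * x * e l) \<in> radical_power (Suc n)"
      by (intro subspace_sum[OF subspace_radical_power]) simp_all
    then show ?thesis using peirce_decomposition[of x] by simp
  qed
  then show "radical_power n \<subseteq> span {x * y | x y. x \<in> radical \<and> y \<in> radical_power n}"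
    by (auto simp: radical_power.simps)
qed

lemma radical_diagonal_corner_eq_0:
  assumes "i < n" "x \<in> radical" "x \<in> corner i i"
  shows "x = 0"
proof -
  have "x \<in> radical_power m" for m
  proof (induction m)
    case (Suc m)
    have "e i * x * e i \<in> radical_power (Suc m)"
      by (rule sandwich_radical_power[OF assms(1) assms(1) no_cycles Suc])
    then show ?case using assms(3) unfolding corner_def by simp
  qed (use assms(2) in simp)
  then show ?thesis using radical_power_eq_0 by blast
qed

lemma diagonal_corner_eq_scalars:
  assumes "i < n" "z \<in> corner i i"
  shows "\<exists>c. z = sc c (e i)"
proof -
  have z: "e i * z = z" "z * e i = z" using assms(2) unfolding corner_def by auto
  obtain l where nil: "nilpotent (z - sc l (e i))"
    using primitive_corner_element_eq_scalar_plus_nilpotent[OF closed primitive_e[OF assms(1)] z] by blast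
  have "z - sc l (e i) \<in> corner i i"
    using z assms(1) unfolding corner_def by (simp add: algebra_simps scale_mult_left scale_mult_right)
  then have "z - sc l (e i) = 0"
    using radical_diagonal_corner_eq_0[OF assms(1)] nilpotent_corner_in_radical[OF assms(1) _ nil] by blast
  then show ?thesis by auto
qed

end

section \<open>Derivations and the first Hochschild cohomology\<close>

context idempotent_decomposition
begin

definition ad :: "'a \<Rightarrow> 'a \<Rightarrow> 'a" where
  "ad x a = x * a - a * x"

lemma Int0_iff: "h \<in> Int0 sc n e \<longleftrightarrow> (\<exists>x\<in>Esub sc n e. h = ad x)"
  unfolding Int0_def ad_def by (auto simp: fun_eq_iff)

lemma Der0D:
  assumes "d \<in> Der0 sc n e"
  shows Der0_linear: "Vector_Spaces.linear sc sc d"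
    and Der0_mult: "d (a * b) = d a * b + a * d b"
    and Der0_e: "i < n \<Longrightarrow> d (e i) = 0"
  using assms unfolding Der0_def by auto

lemma Der0_corner:
  assumes "d \<in> Der0 sc n e" "j < n" "i < n" "v \<in> corner j i"
  shows "d v \<in> corner j i"
proof -
  obtain a where "v = e j * a * e i" using assms(2-4) corner_eq by blast
  then have "d v = e j * d a * e i" using assms(1-3) by (simp add: Der0_mult Der0_e)
  then show ?thesis using assms(2,3) sandwich_in_corner by simp
qed

lemma Esub_acts_by_scalars:
  assumes "x \<in> Esub sc n e" "j < n"
  shows "\<exists>c. x * e j = sc c (e j) \<and> e j * x = sc c (e j)"
  using assms(1) unfolding Esub_def
proof (induction rule: span_induct_alt)
  case base
  show ?case by (intro exI[of _ 0]) simp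
next
  case (step c' s y)
  then obtain l c where l: "l < n" "s = e l" and c: "y * e j = sc c (e j)" "e j * y = sc c (e j)" by blast
  show ?case
  proof (cases "l = j")
    case True
    then show ?thesis using c l assms(2)
      by (intro exI[of _ "c' + c"]) (simp add: distrib_left distrib_right scale_mult_left
          scale_mult_right scale_left_distrib)
  next
    case False
    then show ?thesis using c l assms(2)
      by (intro exI[of _ c]) (simp add: distrib_left distrib_right scale_mult_left scale_mult_right e_mult_e)
  qed
qed

lemma ad_Esub_on_corner:
  assumes "x \<in> Esub sc n e" "j < n" "i < n"
  shows "\<exists>\<mu>. \<forall>v\<in>corner j i. ad x v = sc \<mu> v"
proof -
  obtain cj ci where cj: "x * e j = sc cj (e j)" and ci: "e i * x = sc ci (e i)"
    using Esub_acts_by_scalars[OF assms(1)] assms(2,3) by metis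
  have "ad x v = sc (cj - ci) v" if "v \<in> corner j i" for v
  proof -
    have "x * v = x * e j * v" using that unfolding corner_def by (simp add: mult.assoc)
    moreover have "v * x = v * (e i * x)" using that unfolding corner_def by (simp flip: mult.assoc)
    ultimately show ?thesis using that unfolding ad_def corner_def
      by (simp add: cj ci scale_mult_left scale_mult_right scale_left_diff_distrib)
  qed
  then show ?thesis by blast
qed

lemma Der0_Esub:
  assumes "d \<in> Der0 sc n e" "x \<in> Esub sc n e"
  shows "d x = 0"
  unfolding Esub_def
  by (rule endo.linear_eq_0_on_span[OF Der0_linear[OF assms(1)], of "e ` {..<n}"])
    (use assms Der0_e in \<open>auto simp: Esub_def\<close>)

lemma Esub_commute:
  assumes "x \<in> Esub sc n e" "y \<in> Esub sc n e"
  shows "x * y = y * x"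
proof -
  have lin: "Vector_Spaces.linear sc sc (\<lambda>x. x * y - y * x)"
    by (rule endo.linear_compose_sub[OF linear_mult_right linear_mult_left])
  have "s * y - y * s = 0" if s: "s \<in> e ` {..<n}" for s
  proof -
    obtain l where "l < n" "s = e l" using s by blast
    moreover obtain c where "y * e l = sc c (e l)" "e l * y = sc c (e l)"
      using Esub_acts_by_scalars[OF assms(2) \<open>l < n\<close>] by blast
    ultimately show ?thesis by simp
  qed
  then have "x * y - y * x = 0"
    using endo.linear_eq_0_on_span[OF lin, of "e ` {..<n}" x] assms(1) unfolding Esub_def by simp
  then show ?thesis by simp
qed

lemma Der0_ad:
  assumes "d \<in> Der0 sc n e" "x \<in> Esub sc n e"
  shows "d (ad x a) = ad x (d a)"
  using Der0_Esub[OF assms] unfolding ad_def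
  by (simp add: Der0_mult[OF assms(1)] endo.linear_diff[OF Der0_linear[OF assms(1)]])

lemma ad_commute:
  assumes "x \<in> Esub sc n e" "y \<in> Esub sc n e"
  shows "ad x (ad y a) = ad y (ad x a)"
proof -
  have "x * (y * a) = y * (x * a)" "a * (y * x) = a * (x * y)"
    using Esub_commute[OF assms] by (simp_all flip: mult.assoc)
  then show ?thesis unfolding ad_def by (simp add: algebra_simps)
qed

lemma commutator_add_ad:
  assumes d: "d \<in> Der0 sc n e" and d': "d' \<in> Der0 sc n e"
    and x: "x \<in> Esub sc n e" and y: "y \<in> Esub sc n e"
  shows "(d (d' a + ad y a) + ad x (d' a + ad y a)) - (d' (d a + ad x a) + ad y (d a + ad x a))
    = d (d' a) - d' (d a)"
proof -
  have "ad z (b + c) = ad z b + ad z c" for z b c unfolding ad_def by (simp add: algebra_simps)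
  then show ?thesis
    using ad_commute[OF x y, of a] Der0_ad[OF d y] Der0_ad[OF d' x]
    by (simp add: endo.linear_add[OF Der0_linear[OF d]] endo.linear_add[OF Der0_linear[OF d']]
        algebra_simps)
qed

lemma HH1_memE:
  assumes "f \<in> HH1 sc n e"
  obtains g where "g \<in> Der0 sc n e" "f = {d \<in> Der0 sc n e. (\<lambda>a. g a - d a) \<in> Int0 sc n e}"
  using assms unfolding HH1_def HH1_rel_def by (elim quotientE) blast

lemma HH1_rep_Der0: "f \<in> HH1 sc n e \<Longrightarrow> d \<in> f \<Longrightarrow> d \<in> Der0 sc n e"
  by (elim HH1_memE) blast

lemma HH1_reps_differ_by_ad:
  assumes "f \<in> HH1 sc n e" "d \<in> f" "d' \<in> f"
  shows "\<exists>x\<in>Esub sc n e. \<forall>a. d a = d' a + ad x a"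
proof -
  obtain g where g: "f = {d \<in> Der0 sc n e. (\<lambda>a. g a - d a) \<in> Int0 sc n e}"
    using assms(1) by (elim HH1_memE)
  obtain x x' where x: "x \<in> Esub sc n e" "(\<lambda>a. g a - d a) = ad x"
    and x': "x' \<in> Esub sc n e" "(\<lambda>a. g a - d' a) = ad x'"
    using assms(2,3) unfolding g Int0_iff by blast
  have "d a = d' a + ad (x' - x) a" for a
  proof -
    have da: "d a = g a - ad x a" using fun_cong[OF x(2), of a] by (simp add: diff_eq_eq)
    have d'a: "d' a = g a - ad x' a" using fun_cong[OF x'(2), of a] by (simp add: diff_eq_eq)
    show ?thesis unfolding da d'a ad_def by (simp add: algebra_simps)
  qed
  moreover have "x' - x \<in> Esub sc n e" using x(1) x'(1) unfolding Esub_def by (rule span_diff[rotated])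
  ultimately show ?thesis by blast
qed

lemma some_HH1_rep: "f \<in> HH1 sc n e \<Longrightarrow> (SOME d. d \<in> f) \<in> f"
proof (elim HH1_memE)
  fix g assume g: "g \<in> Der0 sc n e" "f = {d \<in> Der0 sc n e. (\<lambda>a. g a - d a) \<in> Int0 sc n e}"
  have "(\<lambda>a. g a - g a) = ad 0" unfolding ad_def by simp
  moreover have "0 \<in> Esub sc n e" unfolding Esub_def by (rule span_zero)
  ultimately have "g \<in> f" using g unfolding Int0_iff by auto
  then show "(SOME d. d \<in> f) \<in> f" by (rule someI[where P = "\<lambda>d. d \<in> f"])
qed

lemma commutator_of_reps:
  assumes f: "f \<in> HH1 sc n e" and g: "g \<in> HH1 sc n e" and d: "d \<in> f" and d': "d' \<in> g"
  shows "(SOME d. d \<in> f) ((SOME d. d \<in> g) a) - (SOME d. d \<in> g) ((SOME d. d \<in> f) a) = d (d' a) - d' (d a)"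
proof -
  obtain x where x: "x \<in> Esub sc n e" "\<forall>a. (SOME d. d \<in> f) a = d a + ad x a"
    using HH1_reps_differ_by_ad[OF f some_HH1_rep[OF f] d] by blast
  obtain y where y: "y \<in> Esub sc n e" "\<forall>a. (SOME d. d \<in> g) a = d' a + ad y a"
    using HH1_reps_differ_by_ad[OF g some_HH1_rep[OF g] d'] by blast
  show ?thesis
    using commutator_add_ad[OF HH1_rep_Der0[OF f d] HH1_rep_Der0[OF g d'] x(1) y(1)] x(2) y(2) by simp
qed

lemma HH1_bracket_eq_zero_if_commuting_reps:
  assumes f: "f \<in> HH1 sc n e" and g: "g \<in> HH1 sc n e" and d: "d \<in> f" and d': "d' \<in> g"
    and comm: "\<And>a. d (d' a) = d' (d a)"
  shows "HH1_bracket sc n e f g = HH1_zero sc n e"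
proof -
  have "(\<lambda>a. (SOME d. d \<in> f) ((SOME d. d \<in> g) a) - (SOME d. d \<in> g) ((SOME d. d \<in> f) a)) = (\<lambda>_. 0)"
    using commutator_of_reps[OF assms(1-4)] comm by simp
  then show ?thesis unfolding HH1_bracket_def HH1_zero_def Let_def by simp
qed

lemma inner_commutator_if_HH1_bracket_eq_zero:
  assumes f: "f \<in> HH1 sc n e" and g: "g \<in> HH1 sc n e" and d: "d \<in> f" and d': "d' \<in> g"
    and "HH1_bracket sc n e f g = HH1_zero sc n e"
  shows "\<exists>x\<in>Esub sc n e. \<forall>a. d (d' a) - d' (d a) = ad x a"
proof -
  define c where "c a = (SOME d. d \<in> f) ((SOME d. d \<in> g) a) - (SOME d. d \<in> g) ((SOME d. d \<in> f) a)" for a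
  have "(\<lambda>_. 0) \<in> Der0 sc n e" unfolding Der0_def by (simp add: endo.linear_zero)
  moreover have "0 \<in> Esub sc n e" unfolding Esub_def by (rule span_zero)
  ultimately have "(\<lambda>_. 0) \<in> HH1_zero sc n e"
    unfolding HH1_zero_def HH1_class_def HH1_rel_def Int0_iff ad_def by (auto intro!: bexI[of _ 0])
  then have "(\<lambda>_. 0) \<in> HH1_class sc n e c"
    using assms(5) unfolding HH1_bracket_def Let_def c_def by simp
  then have "(\<lambda>a. c a - 0) \<in> Int0 sc n e" unfolding HH1_class_def HH1_rel_def by auto
  then obtain x where x: "x \<in> Esub sc n e" "c = ad x" unfolding Int0_iff by auto
  have "d (d' a) - d' (d a) = ad x a" for a
    using commutator_of_reps[OF f g d d', of a] fun_cong[OF x(2), of a] unfolding c_def by simp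
  then show ?thesis using x(1) by blast
qed

lemma independent_UN_corners:
  assumes sub: "\<And>j i. j < n \<Longrightarrow> i < n \<Longrightarrow> C j i \<subseteq> corner j i"
    and indep: "\<And>j i. j < n \<Longrightarrow> i < n \<Longrightarrow> independent (C j i)"
  shows "independent (\<Union>j<n. \<Union>i<n. C j i)"
  unfolding independent_explicit_module
proof (intro allI impI)
  fix t u v
  assume t: "finite t" "t \<subseteq> (\<Union>j<n. \<Union>i<n. C j i)" "(\<Sum>v\<in>t. sc (u v) v) = 0" "v \<in> t"
  then obtain j i where ji: "j < n" "i < n" "v \<in> C j i" by blast
  \<comment> \<open>Cutting the relation down to the corner (j, i) leaves exactly the part from C j i.\<close>
  have cut: "e j * w * e i = (if w \<in> C j i then w else 0)" if w: "w \<in> t" for w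
  proof (cases "w \<in> C j i")
    case True
    then show ?thesis using corner_project[OF ji(1,2) ji(1,2)] sub[OF ji(1,2)] by auto
  next
    case False
    obtain j' i' where j'i': "j' < n" "i' < n" "w \<in> C j' i'" using w t(2) by blast
    with False have "(j', i') \<noteq> (j, i)" by auto
    then show ?thesis
      using corner_project[OF ji(1,2) j'i'(1,2)] sub[OF j'i'(1,2)] j'i'(3) False by auto
  qed
  have "(\<Sum>w\<in>t. sc (u w) (e j * w * e i)) = 0"
    using arg_cong[OF t(3), of "\<lambda>y. e j * y * e i"]
    by (simp add: sum_distrib_left sum_distrib_right scale_mult_left scale_mult_right)
  then have "(\<Sum>w\<in>t \<inter> C j i. sc (u w) w) = 0"
    using t(1) by (simp add: cut if_distrib sum.If_cases cong: sum.cong)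
  then show "u v = 0"
    using independentD[OF indep[OF ji(1,2)], of "t \<inter> C j i" u v] t(1,4) ji(3) by blast
qed

lemma diagonalizable_map_iff:
  "diagonalizable_map sc d \<longleftrightarrow> (\<exists>B. independent B \<and> span B = UNIV \<and> (\<forall>b\<in>B. \<exists>c. d b = sc c b))"
  unfolding diagonalizable_map_def is_vs_basis_def diagonal_wrt_def by blast

lemma span_UN_corners_eq_UNIV:
  assumes span: "\<And>j i. j < n \<Longrightarrow> i < n \<Longrightarrow> corner j i \<subseteq> span (C j i)"
  shows "span (\<Union>j<n. \<Union>i<n. C j i) = UNIV"
proof -
  have "e j * a * e i \<in> span (\<Union>j<n. \<Union>i<n. C j i)" if ji: "j < n" "i < n" for a j i
  proof -
    have "e j * a * e i \<in> span (C j i)" using span[OF ji] sandwich_in_corner[OF ji] by blast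
    moreover have "span (C j i) \<subseteq> span (\<Union>j<n. \<Union>i<n. C j i)" by (rule span_mono) (use ji in blast)
    ultimately show ?thesis by blast
  qed
  then have sums: "(\<Sum>j<n. \<Sum>i<n. e j * a * e i) \<in> span (\<Union>j<n. \<Union>i<n. C j i)" for a
    by (intro span_sum) simp
  have "a \<in> span (\<Union>j<n. \<Union>i<n. C j i)" for a
    by (subst peirce_decomposition[of a]) (rule sums)
  then show ?thesis by blast
qed

lemma corner_subset_span_common_eigenvectors:
  assumes F: "F \<subseteq> Der0 sc n e" and diag: "\<forall>d\<in>F. diagonalizable_map sc d"
    and comm: "\<And>d d' a. d \<in> F \<Longrightarrow> d' \<in> F \<Longrightarrow> d (d' a) = d' (d a)"
    and ji: "j < n" "i < n"
  shows "corner j i \<subseteq> span {v \<in> corner j i. \<forall>d\<in>F. \<exists>c. d v = sc c v}"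
proof (rule common_eigenvectors_span_invariant_subspace)
  fix d assume "d \<in> F"
  then show "Vector_Spaces.linear sc sc d" using F Der0_linear by blast
next
  fix d assume "d \<in> F"
  then show "\<exists>B. independent B \<and> span B = UNIV \<and> (\<forall>b\<in>B. \<exists>c. d b = sc c b)"
    using diag unfolding diagonalizable_map_iff by blast
next
  fix d d' a assume "d \<in> F" "d' \<in> F"
  then show "d (d' a) = d' (d a)" by (rule comm)
next
  fix d w assume "d \<in> F" "w \<in> corner j i"
  then show "d w \<in> corner j i" using Der0_corner[OF _ ji] F by blast
qed (rule subspace_corner)

lemma Der0_commute_on_corner:
  assumes d: "d \<in> Der0 sc n e" and d': "d' \<in> Der0 sc n e" and diag: "diagonalizable_map sc d"
    and x: "x \<in> Esub sc n e" and comm: "\<And>a. d (d' a) - d' (d a) = ad x a"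
    and ji: "j < n" "i < n" and v: "v \<in> corner j i"
  shows "d (d' v) = d' (d v)"
proof -
  obtain \<mu> where \<mu>: "\<forall>v\<in>corner j i. ad x v = sc \<mu> v" using ad_Esub_on_corner[OF x ji] by blast
  have lin: "Vector_Spaces.linear sc sc d" "Vector_Spaces.linear sc sc d'"
    using d d' by (simp_all add: Der0_linear)
  show ?thesis
  proof (cases "\<mu> = 0")
    case True
    then show ?thesis using comm[of v] \<mu> v by simp
  next
    case False
    obtain B where B: "independent B" "span B = UNIV" "\<forall>b\<in>B. \<exists>c. d b = sc c b"
      using diag unfolding diagonalizable_map_iff by blast
    \<comment> \<open>For \<mu> \<noteq> 0 no eigenvector of d survives in the corner, so the corner is 0.\<close>
    have "e j * b * e i = 0" if b: "b \<in> B" for b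
    proof -
      from bspec[OF B(3) b] obtain l where "d b = sc l b" ..
      then have "d (e j * b * e i) = sc l (e j * b * e i)"
        using d ji by (simp add: Der0_mult Der0_e scale_mult_left scale_mult_right)
      moreover have "d (d' (e j * b * e i)) - d' (d (e j * b * e i)) = sc \<mu> (e j * b * e i)"
        using comm \<mu> sandwich_in_corner[OF ji] by simp
      ultimately show ?thesis by (rule diagonal_eigenvector_eq_0_if_commutator_scalar[OF lin B _ _ False])
    qed
    then have "e j * v * e i = 0"
      by (rule endo.linear_eq_0_on_span[OF linear_sandwich[of "e j" "e i"]]) (use B(2) in auto)
    then have "v = 0" using v unfolding corner_def by simp
    then show ?thesis using lin by (simp add: endo.linear_0)
  qed
qed

lemma Der0_commute_if_inner_commutator:
  assumes d: "d \<in> Der0 sc n e" and d': "d' \<in> Der0 sc n e" and diag: "diagonalizable_map sc d"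
    and x: "x \<in> Esub sc n e" and comm: "\<And>a. d (d' a) - d' (d a) = ad x a"
  shows "d (d' a) = d' (d a)"
proof -
  have lin: "Vector_Spaces.linear sc sc d" "Vector_Spaces.linear sc sc d'"
    using d d' by (simp_all add: Der0_linear)
  have "d (d' a) = (\<Sum>j<n. \<Sum>i<n. d (d' (e j * a * e i)))"
    using arg_cong[OF peirce_decomposition[of a], of "\<lambda>y. d (d' y)"] lin
    by (simp add: endo.linear_sum)
  also have "\<dots> = (\<Sum>j<n. \<Sum>i<n. d' (d (e j * a * e i)))"
    using Der0_commute_on_corner[OF d d' diag x comm _ _ sandwich_in_corner] by simp
  also have "\<dots> = d' (d a)"
    using arg_cong[OF peirce_decomposition[of a], of "\<lambda>y. d' (d y)"] lin
    by (simp add: endo.linear_sum)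
  finally show ?thesis .
qed

lemma commuting_diagonalizable_if_HH1_set_diagonalizable:
  assumes D: "D \<subseteq> HH1 sc n e" and "HH1_set_diagonalizable sc n e D"
  shows "(\<forall>f\<in>D. HH1_diagonalizable sc f) \<and>
    (\<forall>f\<in>D. \<forall>f'\<in>D. HH1_bracket sc n e f f' = HH1_zero sc n e)"
proof -
  obtain B where B: "algebra_basis sc n e B" "\<forall>f\<in>D. HH1_diagonal_wrt sc f B"
    using assms(2) unfolding HH1_set_diagonalizable_def by blast
  have basis: "independent B" "span B = UNIV" using B(1) unfolding algebra_basis_def is_vs_basis_def by auto
  have rep: "\<exists>d\<in>f. \<forall>b\<in>B. \<exists>c. d b = sc c b" if "f \<in> D" for f
    using B(2) that unfolding HH1_diagonal_wrt_def diagonal_wrt_def by blast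
  show ?thesis
  proof (intro conjI ballI)
    fix f assume "f \<in> D"
    then show "HH1_diagonalizable sc f"
      using rep basis unfolding HH1_diagonalizable_def diagonalizable_map_iff by blast
  next
    fix f f' assume "f \<in> D" "f' \<in> D"
    then obtain d d' where d: "d \<in> f" "\<forall>b\<in>B. \<exists>c. d b = sc c b" and d': "d' \<in> f'" "\<forall>b\<in>B. \<exists>c. d' b = sc c b"
      using rep by meson
    have f: "f \<in> HH1 sc n e" and f': "f' \<in> HH1 sc n e" using \<open>f \<in> D\<close> \<open>f' \<in> D\<close> D by auto
    show "HH1_bracket sc n e f f' = HH1_zero sc n e"
    proof (rule HH1_bracket_eq_zero_if_commuting_reps[OF f f' d(1) d'(1)])
      show "d (d' a) = d' (d a)" for a
        using diagonal_maps_commute[OF Der0_linear Der0_linear basis(2) d(2) d'(2)]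
          HH1_rep_Der0[OF f d(1)] HH1_rep_Der0[OF f' d'(1)] by blast
    qed
  qed
qed

end

context acyclic_basic_algebra
begin

lemma algebra_basis_of_corner_bases:
  assumes diag: "\<And>i. i < n \<Longrightarrow> C i i = {e i}"
    and off_diag: "\<And>j i. j < n \<Longrightarrow> i < n \<Longrightarrow> j \<noteq> i \<Longrightarrow>
      C j i \<subseteq> corner j i \<and> independent (C j i) \<and> corner j i \<subseteq> span (C j i)"
  shows "algebra_basis sc n e (\<Union>j<n. \<Union>i<n. C j i)"
proof -
  have sub: "C j i \<subseteq> corner j i" if "j < n" "i < n" for j i
    using that diag off_diag by (cases "j = i") (auto simp: corner_def)
  have span: "corner j i \<subseteq> span (C j i)" if ji: "j < n" "i < n" for j i
  proof (cases "j = i")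
    case True
    show ?thesis
    proof
      fix x assume "x \<in> corner j i"
      then obtain c where "x = sc c (e i)" using diagonal_corner_eq_scalars True ji by blast
      then show "x \<in> span (C j i)" using diag[OF ji(2)] True by (auto intro: span_scale span_base)
    qed
  qed (use ji off_diag in blast)
  have indep: "independent (C j i)" if "j < n" "i < n" for j i
    using that diag off_diag e_nonzero by (cases "j = i") auto
  have "independent (\<Union>j<n. \<Union>i<n. C j i)" by (rule independent_UN_corners[OF sub indep])
  moreover have "span (\<Union>j<n. \<Union>i<n. C j i) = UNIV" by (rule span_UN_corners_eq_UNIV[OF span])
  moreover have "(\<Union>j<n. \<Union>i<n. C j i) \<subseteq> (\<Union>i<n. \<Union>j<n. {e j * a * e i | a. True})"
  proof
    fix v assume "v \<in> (\<Union>j<n. \<Union>i<n. C j i)"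
    then obtain j i where ji: "j < n" "i < n" "v \<in> C j i" by blast
    then have "v \<in> {e j * a * e i | a. True}" using sub[OF ji(1,2)] corner_eq[OF ji(1,2)] by auto
    then show "v \<in> (\<Union>i<n. \<Union>j<n. {e j * a * e i | a. True})"
      by (intro UN_I[of i] UN_I[of j]) (simp_all add: ji(1,2))
  qed
  moreover have "e ` {..<n} \<subseteq> (\<Union>j<n. \<Union>i<n. C j i)"
  proof -
    have "e i \<in> C i i" if "i < n" for i by (simp add: diag that)
    then show ?thesis by blast
  qed
  moreover have "(\<Union>j<n. \<Union>i<n. C j i) - e ` {..<n} \<subseteq> radical"
  proof
    fix v assume "v \<in> (\<Union>j<n. \<Union>i<n. C j i) - e ` {..<n}"
    then obtain j i where ji: "j < n" "i < n" "v \<in> C j i" "v \<notin> e ` {..<n}" by blast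
    then have "j \<noteq> i" using diag by auto
    then show "v \<in> radical" using ji sub off_diagonal_corner_subset_radical by blast
  qed
  ultimately show ?thesis unfolding algebra_basis_def is_vs_basis_def by blast
qed

lemma common_diagonal_algebra_basis:
  assumes F: "F \<subseteq> Der0 sc n e" and diag: "\<forall>d\<in>F. diagonalizable_map sc d"
    and comm: "\<And>d d' a. d \<in> F \<Longrightarrow> d' \<in> F \<Longrightarrow> d (d' a) = d' (d a)"
  shows "\<exists>B. algebra_basis sc n e B \<and> (\<forall>d\<in>F. diagonal_wrt sc d B)"
proof -
  define V where "V j i = {v \<in> corner j i. \<forall>d\<in>F. \<exists>c. d v = sc c v}" for j i
  define B where "B j i = (SOME B. B \<subseteq> V j i \<and> independent B \<and> V j i \<subseteq> span B)" for j i
  have B: "B j i \<subseteq> V j i \<and> independent (B j i) \<and> V j i \<subseteq> span (B j i)" for j i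
  proof -
    obtain B' where "B' \<subseteq> V j i" "independent B'" "V j i \<subseteq> span B'"
      by (rule maximal_independent_subset)
    then have "\<exists>B. B \<subseteq> V j i \<and> independent B \<and> V j i \<subseteq> span B" by blast
    then show ?thesis unfolding B_def by (rule someI_ex)
  qed
  define C where "C j i = (if j = i then {e i} else B j i)" for j i
  have "corner j i \<subseteq> span (V j i)" if "j < n" "i < n" for j i
    unfolding V_def by (rule corner_subset_span_common_eigenvectors[OF F diag _ that]) (fact comm)
  then have "corner j i \<subseteq> span (B j i)" if "j < n" "i < n" for j i
    using B[of j i] span_mono[of "V j i" "span (B j i)"] that by (auto simp: span_span)
  moreover have "B j i \<subseteq> corner j i" "independent (B j i)" for j i
    using B[of j i] unfolding V_def by auto
  ultimately have "algebra_basis sc n e (\<Union>j<n. \<Union>i<n. C j i)"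
    unfolding C_def by (intro algebra_basis_of_corner_bases) auto
  moreover have "diagonal_wrt sc d (\<Union>j<n. \<Union>i<n. C j i)" if "d \<in> F" for d
    unfolding diagonal_wrt_def
  proof
    fix v assume "v \<in> (\<Union>j<n. \<Union>i<n. C j i)"
    then obtain j i where ji: "j < n" "i < n" "v \<in> C j i" by blast
    show "\<exists>c. d v = sc c v"
    proof (cases "j = i")
      case True
      then have "d v = sc 0 v" using ji F that Der0_e unfolding C_def by auto
      then show ?thesis ..
    next
      case False
      then have "v \<in> V j i" using ji(3) B[of j i] unfolding C_def by auto
      then show ?thesis using \<open>d \<in> F\<close> unfolding V_def by blast
    qed
  qed
  ultimately show ?thesis by blast
qed

lemma HH1_set_diagonalizable_if_commuting_diagonalizable:
  assumes D: "D \<subseteq> HH1 sc n e" and diag: "\<forall>f\<in>D. HH1_diagonalizable sc f"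
    and bracket: "\<forall>f\<in>D. \<forall>f'\<in>D. HH1_bracket sc n e f f' = HH1_zero sc n e"
  shows "HH1_set_diagonalizable sc n e D"
proof -
  have "\<forall>f\<in>D. \<exists>d. d \<in> f \<and> diagonalizable_map sc d"
    using diag unfolding HH1_diagonalizable_def by blast
  then obtain rep where rep: "\<And>f. f \<in> D \<Longrightarrow> rep f \<in> f \<and> diagonalizable_map sc (rep f)"
    by metis
  have rep_Der0: "rep f \<in> Der0 sc n e" if "f \<in> D" for f
    using HH1_rep_Der0 rep D that by blast
  have "rep f (rep g a) = rep g (rep f a)" if fg: "f \<in> D" "g \<in> D" for f g a
  proof -
    obtain x where "x \<in> Esub sc n e" "\<forall>a. rep f (rep g a) - rep g (rep f a) = ad x a"
      using inner_commutator_if_HH1_bracket_eq_zero[of f g "rep f" "rep g"] D rep bracket fg by blast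
    then show ?thesis using Der0_commute_if_inner_commutator rep_Der0 rep fg by blast
  qed
  then obtain B where "algebra_basis sc n e B" "\<forall>d\<in>rep ` D. diagonal_wrt sc d B"
    using common_diagonal_algebra_basis[of "rep ` D"] rep rep_Der0 by blast
  then show ?thesis
    unfolding HH1_set_diagonalizable_def HH1_diagonal_wrt_def using rep by blast
qed

end

lemma finite_dim_algebra_imp_fd_algebra:
  assumes "finite_dim_algebra sc"
  shows "\<exists>Basis. fd_algebra sc Basis"
proof -
  interpret vector_space sc using assms unfolding finite_dim_algebra_def k_algebra_def by blast
  obtain S where S: "finite S" "span S = UNIV" using assms unfolding finite_dim_algebra_def by blast
  obtain Basis where "independent Basis" "UNIV \<subseteq> span Basis"
    using maximal_independent_subset[of UNIV] by blast
  moreover have "finite Basis" using independent_span_bound[OF S(1) calculation(1)] S(2) by simp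
  ultimately have "finite_dimensional_vector_space sc Basis" by unfold_locales auto
  then show ?thesis
    using assms unfolding finite_dim_algebra_def k_algebra_def fd_algebra_def fd_algebra_axioms_def
    by metis
qed

theorem proposition2p3:
  fixes sc :: "'k::field \<Rightarrow> 'a::ring_1 \<Rightarrow> 'a"
    and n :: nat and e :: "nat \<Rightarrow> 'a"
    and D :: "('a \<Rightarrow> 'a) set set"
  assumes "alg_closed_field TYPE('k)"
    and "finite_dim_algebra sc"
    and "complete_primitive_orthogonal_idempotents n e"
    and "basic_algebra sc n e"
    and "connected_algebra TYPE('a)"
    and "quiver_acyclic sc n e"
    and "D \<subseteq> HH1 sc n e"
  shows "HH1_set_diagonalizable sc n e D \<longleftrightarrow>
           (\<forall>f\<in>D. HH1_diagonalizable sc f) \<and>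
           (\<forall>f\<in>D. \<forall>f'\<in>D. HH1_bracket sc n e f f' = HH1_zero sc n e)"
proof -
  obtain Basis where "fd_algebra sc Basis"
    using finite_dim_algebra_imp_fd_algebra[OF assms(2)] by blast
  then interpret acyclic_basic_algebra sc Basis n e
    using assms(1,3,4,6)
    by (simp add: acyclic_basic_algebra_def acyclic_basic_algebra_axioms_def basic_fd_algebra_def
        basic_fd_algebra_axioms_def idempotent_decomposition_def idempotent_decomposition_axioms_def)
  show ?thesis
    using commuting_diagonalizable_if_HH1_set_diagonalizable[OF assms(7)]
      HH1_set_diagonalizable_if_commuting_diagonalizable[OF assms(7)] by blast
qed

end
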